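(* Let $\mathbf V$ be a set of unlabelled 1-graphs and let $\mathbf G_2(\mathbf V)$ be the set of unlabelled 2-graphs all of whose vertex graphs lie (up to isomorphism) in $\mathbf V$. Let $\overline{\mathbf G_2(\mathbf V)}=\{\Gamma'/\Theta:\ \Theta\subseteq\Gamma'\in\mathbf G_2(\mathbf V)\}$ be its contraction closure. Then the subalgebra $\langle\overline{\mathbf G_2(\mathbf V)}\rangle$ of the 2-graph bialgebra $\mathcal G$ generated by $\overline{\mathbf G_2(\mathbf V)}$ is a subbialgebra of $\mathcal G$.
   Context: A 1-graph is $(\mathcal V,\mathcal H,\nu,\iota)$: finite sets, $\nu:\mathcal H\to\mathcal V$, $\iota$ an involution of $\mathcal H$; isomorphisms are pairs of bijections intertwining $\nu$ and $\iota$. A 2-graph is $G=(\mathcal V,\mathcal H,\nu,\iota;\mathcal S,\mu,\sigma_1,\sigma_2)$: a 1-graph together with a finite set $\mathcal S$ of strand sections, $\mu:\mathcal S\to\mathcal H$, a fixed-point free involution $\sigma_1$ of $\mathcal S$ with $\nu\circ\mu\circ\sigma_1=\nu\circ\mu$, and an involution $\sigma_2$ of $\mathcal S$ with $\iota\circ\mu=\mu\circ\sigma_2$ such that $s$ is fixed by $\sigma_2$ iff $\mu(s)$ is fixed by $\iota$. The vertex graph of $v\in\mathcal V$ is the 1-graph $g_v=(\nu^{-1}(v),(\nu\circ\mu)^{-1}(v),\mu|,\sigma_1|)$. Edges are two-element orbits of $\iota$; edge strands are two-element orbits of $\sigma_2$; fixed points are external. A subgraph $H\subseteq G$ differs from $G$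 only in having a subset of the edges and the corresponding subset of edge strands (the removed ones becoming external). An external face of $H$ is a tuple $(s_1,\dots,s_{2n})$ of distinct strand sections with $s_{2i}=\sigma_1(s_{2i-1})$, $s_{2i+1}=\sigma_{2,H}(s_{2i})$, $s_1,s_{2n}$ fixed by $\sigma_{2,H}$. The contraction $G/H$ has vertices the connected components of $H$, half-edges and strand sections the external ones of $H$, $\nu$ mapping to the component, $\mu$ restricted, edges and edge strands those of $G$ not in $H$, and $\sigma_1$ pairing $s_1$ with $s_{2n}$ for each external face of $H$. Unlabelled 2-graphs are isomorphism classes (bijections on vertices, half-edges, strand sections intertwining all structure). The bialgebra $\mathcal G$ is the $\mathbb Q$-vector space with basis all unlabelled 2-graphs, product disjoint union, unit the empty 2-graph, coproduct $\Delta(\Gamma)=\sum_{\Theta\subseteq\Gamma}\Theta\otimes\Gamma/\Theta$ (sum over subgraphs) and counit $\epsilon(\Gamma)=1$ if $\Gamma$ has no edges and $0$ otherwise. *)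

theory Defs
  imports Complex_Main
begin

record graph1 =
  V1 :: "nat set"
  H1 :: "nat set"
  nu1 :: "nat \<Rightarrow> nat"
  iota1 :: "nat \<Rightarrow> nat"

definition wf1 :: "graph1 \<Rightarrow> bool" where
  "wf1 g \<longleftrightarrow> finite (V1 g) \<and> finite (H1 g)
     \<and> (\<forall>h\<in>H1 g. nu1 g h \<in> V1 g)
     \<and> (\<forall>h\<in>H1 g. iota1 g h \<in> H1 g \<and> iota1 g (iota1 g h) = h)"

definition iso1 :: "graph1 \<Rightarrow> graph1 \<Rightarrow> bool" where
  "iso1 g g' \<longleftrightarrow> (\<exists>fV fH. bij_betw fV (V1 g) (V1 g') \<and> bij_betw fH (H1 g) (H1 g')
     \<and> (\<forall>h\<in>H1 g. fV (nu1 g h) = nu1 g' (fH h) \<and> fH (iota1 g h) = iota1 g' (fH h)))"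

text \<open>Unlabelled 1-graphs = isomorphism classes of (well-formed) 1-graphs.\<close>
definition ucls1 :: "graph1 \<Rightarrow> graph1 set" where
  "ucls1 g = {g'. wf1 g' \<and> iso1 g g'}"

definition UG1 :: "graph1 set set" where
  "UG1 = {ucls1 g | g. wf1 g}"

record graph2 =
  V :: "nat set"
  H :: "nat set"
  S :: "nat set"
  nu :: "nat \<Rightarrow> nat"
  iota :: "nat \<Rightarrow> nat"
  mu :: "nat \<Rightarrow> nat"
  sig1 :: "nat \<Rightarrow> nat"
  sig2 :: "nat \<Rightarrow> nat"

definition wf2 :: "graph2 \<Rightarrow> bool" where
  "wf2 G \<longleftrightarrow> finite (V G) \<and> finite (H G) \<and> finite (S G)
     \<and> (\<forall>h\<in>H G. nu G h \<in> V G)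
     \<and> (\<forall>h\<in>H G. iota G h \<in> H G \<and> iota G (iota G h) = h)
     \<and> (\<forall>s\<in>S G. mu G s \<in> H G)
     \<and> (\<forall>s\<in>S G. sig1 G s \<in> S G \<and> sig1 G (sig1 G s) = s \<and> sig1 G s \<noteq> s
                  \<and> nu G (mu G (sig1 G s)) = nu G (mu G s))
     \<and> (\<forall>s\<in>S G. sig2 G s \<in> S G \<and> sig2 G (sig2 G s) = s
                  \<and> iota G (mu G s) = mu G (sig2 G s)
                  \<and> (sig2 G s = s \<longleftrightarrow> iota G (mu G s) = mu G s))"

definition iso2 :: "graph2 \<Rightarrow> graph2 \<Rightarrow> bool" where
  "iso2 G G' \<longleftrightarrow> (\<exists>fV fH fS. bij_betw fV (V G) (V G') \<and> bij_betw fH (H G) (H G')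
     \<and> bij_betw fS (S G) (S G')
     \<and> (\<forall>h\<in>H G. fV (nu G h) = nu G' (fH h) \<and> fH (iota G h) = iota G' (fH h))
     \<and> (\<forall>s\<in>S G. fH (mu G s) = mu G' (fS s) \<and> fS (sig1 G s) = sig1 G' (fS s)
                  \<and> fS (sig2 G s) = sig2 G' (fS s)))"

definition ucls :: "graph2 \<Rightarrow> graph2 set" where
  "ucls G = {G'. wf2 G' \<and> iso2 G G'}"

definition UG2 :: "graph2 set set" where
  "UG2 = {ucls G | G. wf2 G}"

definition rep :: "graph2 set \<Rightarrow> graph2" where
  "rep x = (SOME G. G \<in> x)"

definition vgraph :: "graph2 \<Rightarrow> nat \<Rightarrow> graph1" where
  "vgraph G v = \<lparr> V1 = {h\<in>H G. nu G h = v}, H1 = {s\<in>S G. nu G (mu G s) = v},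
                  nu1 = mu G, iota1 = sig1 G \<rparr>"

definition edges :: "graph2 \<Rightarrow> nat set set" where
  "edges G = {{h, iota G h} | h. h \<in> H G \<and> iota G h \<noteq> h}"

text \<open>The subgraph of G keeping exactly the edges in F (and the corresponding edge
  strands); removed half-edges / strand sections become external.\<close>
definition subg :: "graph2 \<Rightarrow> nat set set \<Rightarrow> graph2" where
  "subg G F = G\<lparr> iota := (\<lambda>h. if h \<in> \<Union>F then iota G h else h),
                 sig2 := (\<lambda>s. if mu G s \<in> \<Union>F then sig2 G s else s) \<rparr>"

definition adj :: "graph2 \<Rightarrow> (nat \<times> nat) set" where
  "adj G = {(nu G h, nu G (iota G h)) | h. h \<in> H G \<and> iota G h \<noteq> h}"

definition comp :: "graph2 \<Rightarrow> nat \<Rightarrow> nat set" where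
  "comp G v = {w \<in> V G. (v, w) \<in> (adj G)\<^sup>*}"

definition comps :: "graph2 \<Rightarrow> nat set set" where
  "comps G = comp G ` V G"

text \<open>External faces of a 2-graph K, as lists [s_1,...,s_2n] (0-indexed here).\<close>
definition ext_face :: "graph2 \<Rightarrow> nat list \<Rightarrow> bool" where
  "ext_face K xs \<longleftrightarrow> xs \<noteq> [] \<and> even (length xs) \<and> distinct xs \<and> set xs \<subseteq> S K
     \<and> (\<forall>i. 2*i+1 < length xs \<longrightarrow> xs ! (2*i+1) = sig1 K (xs ! (2*i)))
     \<and> (\<forall>i. 2*i+2 < length xs \<longrightarrow> xs ! (2*i+2) = sig2 K (xs ! (2*i+1)))
     \<and> sig2 K (hd xs) = hd xs \<and> sig2 K (last xs) = last xs"

text \<open>Contraction G/K where K = subg G F. A vertex of G/K (a connected component of K)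
  is labelled by the minimal vertex label it contains.\<close>
definition contr :: "graph2 \<Rightarrow> nat set set \<Rightarrow> graph2" where
  "contr G F = (let K = subg G F in
     \<lparr> V = Min ` comps K,
       H = {h \<in> H G. iota K h = h},
       S = {s \<in> S G. sig2 K s = s},
       nu = (\<lambda>h. Min (comp K (nu G h))),
       iota = iota G,
       mu = mu G,
       sig1 = (\<lambda>s. THE t. \<exists>xs. ext_face K xs \<and> hd xs = s \<and> last xs = t),
       sig2 = sig2 G \<rparr>)"

definition mix :: "(nat \<Rightarrow> nat) \<Rightarrow> (nat \<Rightarrow> nat) \<Rightarrow> nat \<Rightarrow> nat" where
  "mix f g n = (if even n then 2 * f (n div 2) else 2 * g (n div 2) + 1)"

definition dlab :: "nat set \<Rightarrow> nat set \<Rightarrow> nat set" where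
  "dlab A B = (\<lambda>n. 2*n) ` A \<union> (\<lambda>n. 2*n+1) ` B"

definition du :: "graph2 \<Rightarrow> graph2 \<Rightarrow> graph2" where
  "du G G' = \<lparr> V = dlab (V G) (V G'), H = dlab (H G) (H G'), S = dlab (S G) (S G'),
     nu = mix (nu G) (nu G'), iota = mix (iota G) (iota G'), mu = mix (mu G) (mu G'),
     sig1 = mix (sig1 G) (sig1 G'), sig2 = mix (sig2 G) (sig2 G') \<rparr>"

definition empty2 :: graph2 where
  "empty2 = \<lparr> V = {}, H = {}, S = {}, nu = id, iota = id, mu = id, sig1 = id, sig2 = id \<rparr>"

text \<open>Elements of the Q-vector space with basis UG2: finitely supported coefficient
  functions; G \<otimes> G is identified with finitely supported functions on pairs of basis
  elements (the free vector space on UG2 \<times> UG2).\<close>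
type_synonym elt = "graph2 set \<Rightarrow> rat"
type_synonym elt2 = "graph2 set \<times> graph2 set \<Rightarrow> rat"

definition supp :: "('a \<Rightarrow> rat) \<Rightarrow> 'a set" where
  "supp a = {x. a x \<noteq> 0}"

definition algG :: "elt set" where
  "algG = {a. finite (supp a) \<and> supp a \<subseteq> UG2}"

definition gbasis :: "graph2 set \<Rightarrow> elt" where
  "gbasis x = (\<lambda>z. if z = x then 1 else 0)"

definition gunit :: elt where
  "gunit = gbasis (ucls empty2)"

definition gmult :: "elt \<Rightarrow> elt \<Rightarrow> elt" where
  "gmult a b = (\<lambda>z. \<Sum>(x, y) \<in> supp a \<times> supp b.
       if ucls (du (rep x) (rep y)) = z then a x * b y else 0)"

definition coprod_basis :: "graph2 set \<Rightarrow> elt2" where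
  "coprod_basis x = (\<lambda>(p, q). of_nat (card {F. F \<subseteq> edges (rep x)
       \<and> ucls (subg (rep x) F) = p \<and> ucls (contr (rep x) F) = q}))"

definition gcoprod :: "elt \<Rightarrow> elt2" where
  "gcoprod a = (\<lambda>pq. \<Sum>x \<in> supp a. a x * coprod_basis x pq)"

definition gtensor :: "elt \<Rightarrow> elt \<Rightarrow> elt2" where
  "gtensor a b = (\<lambda>(p, q). a p * b q)"

inductive_set qspan :: "('a \<Rightarrow> rat) set \<Rightarrow> ('a \<Rightarrow> rat) set" for T where
  zero: "(\<lambda>_. 0) \<in> qspan T"
| step: "u \<in> qspan T \<Longrightarrow> t \<in> T \<Longrightarrow> (\<lambda>z. u z + c * t z) \<in> qspan T"

inductive_set gen_alg :: "graph2 set set \<Rightarrow> elt set" for X where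
  gen: "x \<in> X \<Longrightarrow> gbasis x \<in> gen_alg X"
| unit: "gunit \<in> gen_alg X"
| zero: "(\<lambda>_. 0) \<in> gen_alg X"
| add: "a \<in> gen_alg X \<Longrightarrow> b \<in> gen_alg X \<Longrightarrow> (\<lambda>z. a z + b z) \<in> gen_alg X"
| smult: "a \<in> gen_alg X \<Longrightarrow> (\<lambda>z. c * a z) \<in> gen_alg X"
| mult: "a \<in> gen_alg X \<Longrightarrow> b \<in> gen_alg X \<Longrightarrow> gmult a b \<in> gen_alg X"

definition is_subalgebra :: "elt set \<Rightarrow> bool" where
  "is_subalgebra B \<longleftrightarrow> B \<subseteq> algG \<and> gunit \<in> B \<and> (\<lambda>_. 0) \<in> B
     \<and> (\<forall>a\<in>B. \<forall>b\<in>B. (\<lambda>z. a z + b z) \<in> B)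
     \<and> (\<forall>a\<in>B. \<forall>c. (\<lambda>z. c * a z) \<in> B)
     \<and> (\<forall>a\<in>B. \<forall>b\<in>B. gmult a b \<in> B)"

text \<open>Subbialgebra: a subalgebra B with \<Delta>(B) \<subseteq> B \<otimes> B (the counit restricts automatically).\<close>
definition is_subbialgebra :: "elt set \<Rightarrow> bool" where
  "is_subbialgebra B \<longleftrightarrow> is_subalgebra B
     \<and> (\<forall>a\<in>B. gcoprod a \<in> qspan (case_prod gtensor ` (B \<times> B)))"

definition G2 :: "graph1 set set \<Rightarrow> graph2 set set" where
  "G2 VV = {ucls G | G. wf2 G \<and> (\<forall>v\<in>V G. ucls1 (vgraph G v) \<in> VV)}"

definition cclosure :: "graph1 set set \<Rightarrow> graph2 set set" where
  "cclosure VV = {ucls (contr G F) | G F. wf2 G \<and> ucls G \<in> G2 VV \<and> F \<subseteq> edges G}"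

end

(* The linear span of the contraction closure X = {Gamma/Theta} is already closed under the
   product and the coproduct.  The empty graph lies in X, and the disjoint union of Gamma1/Theta1
   and Gamma2/Theta2 is (Gamma1 + Gamma2)/(Theta1 + Theta2), whose vertex graphs are those of
   Gamma1 and Gamma2.  A subgraph of Gamma/Theta with edge set Theta' is (Theta u Theta')/Theta,
   where Theta u Theta' is a subgraph of Gamma with the same vertex graphs, and the corresponding
   quotient is (Gamma/Theta)/Theta' = Gamma/(Theta u Theta').  Establishing these isomorphisms,
   and that contraction respects isomorphism, is bookkeeping except for the strand involution
   sigma1 of a contraction, which pairs the two ends of each external face: the walk from an
   external strand section alternating sigma1 and sigma2 never repeats itself, so it ends at the
   unique other external section of its orbit, and that section lies in the same connected
   component. *)

theory Submission
  imports Defs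
begin

lemma wf2D:
  assumes "wf2 G"
  shows "finite (V G)" "finite (H G)" "finite (S G)"
   "\<And>h. h \<in> H G \<Longrightarrow> nu G h \<in> V G"
   "\<And>h. h \<in> H G \<Longrightarrow> iota G h \<in> H G" "\<And>h. h \<in> H G \<Longrightarrow> iota G (iota G h) = h"
   "\<And>s. s \<in> S G \<Longrightarrow> mu G s \<in> H G"
   "\<And>s. s \<in> S G \<Longrightarrow> sig1 G s \<in> S G" "\<And>s. s \<in> S G \<Longrightarrow> sig1 G (sig1 G s) = s"
   "\<And>s. s \<in> S G \<Longrightarrow> sig1 G s \<noteq> s" "\<And>s. s \<in> S G \<Longrightarrow> nu G (mu G (sig1 G s)) = nu G (mu G s)"
   "\<And>s. s \<in> S G \<Longrightarrow> sig2 G s \<in> S G" "\<And>s. s \<in> S G \<Longrightarrow> sig2 G (sig2 G s) = s"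
   "\<And>s. s \<in> S G \<Longrightarrow> iota G (mu G s) = mu G (sig2 G s)"
   "\<And>s. s \<in> S G \<Longrightarrow> sig2 G s = s \<longleftrightarrow> iota G (mu G s) = mu G s"
  using assms unfolding wf2_def by auto

lemma wf2I:
  assumes "finite (V G)" "finite (H G)" "finite (S G)"
   "\<And>h. h \<in> H G \<Longrightarrow> nu G h \<in> V G"
   "\<And>h. h \<in> H G \<Longrightarrow> iota G h \<in> H G" "\<And>h. h \<in> H G \<Longrightarrow> iota G (iota G h) = h"
   "\<And>s. s \<in> S G \<Longrightarrow> mu G s \<in> H G"
   "\<And>s. s \<in> S G \<Longrightarrow> sig1 G s \<in> S G" "\<And>s. s \<in> S G \<Longrightarrow> sig1 G (sig1 G s) = s"
   "\<And>s. s \<in> S G \<Longrightarrow> sig1 G s \<noteq> s" "\<And>s. s \<in> S G \<Longrightarrow> nu G (mu G (sig1 G s)) = nu G (mu G s)"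
   "\<And>s. s \<in> S G \<Longrightarrow> sig2 G s \<in> S G" "\<And>s. s \<in> S G \<Longrightarrow> sig2 G (sig2 G s) = s"
   "\<And>s. s \<in> S G \<Longrightarrow> iota G (mu G s) = mu G (sig2 G s)"
   "\<And>s. s \<in> S G \<Longrightarrow> sig2 G s = s \<longleftrightarrow> iota G (mu G s) = mu G s"
  shows "wf2 G"
  using assms unfolding wf2_def by auto

definition iso2_by :: "graph2 \<Rightarrow> graph2 \<Rightarrow> (nat \<Rightarrow> nat) \<Rightarrow> (nat \<Rightarrow> nat) \<Rightarrow> (nat \<Rightarrow> nat) \<Rightarrow> bool" where
  "iso2_by A B fV fH fS \<longleftrightarrow> bij_betw fV (V A) (V B) \<and> bij_betw fH (H A) (H B)
     \<and> bij_betw fS (S A) (S B)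
     \<and> (\<forall>h\<in>H A. fV (nu A h) = nu B (fH h) \<and> fH (iota A h) = iota B (fH h))
     \<and> (\<forall>s\<in>S A. fH (mu A s) = mu B (fS s) \<and> fS (sig1 A s) = sig1 B (fS s)
                  \<and> fS (sig2 A s) = sig2 B (fS s))"

lemma iso2_iff_iso2_by: "iso2 A B \<longleftrightarrow> (\<exists>fV fH fS. iso2_by A B fV fH fS)"
  unfolding iso2_def iso2_by_def by simp

lemma iso2_byD:
  assumes "iso2_by A B fV fH fS"
  shows "bij_betw fV (V A) (V B)" "bij_betw fH (H A) (H B)" "bij_betw fS (S A) (S B)"
    "\<And>h. h \<in> H A \<Longrightarrow> fV (nu A h) = nu B (fH h)" "\<And>h. h \<in> H A \<Longrightarrow> fH (iota A h) = iota B (fH h)"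
    "\<And>s. s \<in> S A \<Longrightarrow> fH (mu A s) = mu B (fS s)" "\<And>s. s \<in> S A \<Longrightarrow> fS (sig1 A s) = sig1 B (fS s)"
    "\<And>s. s \<in> S A \<Longrightarrow> fS (sig2 A s) = sig2 B (fS s)"
  using assms unfolding iso2_by_def by auto

lemma iso2_by_inv:
  assumes m: "iso2_by A B fV fH fS" and A: "wf2 A"
  shows "iso2_by B A (inv_into (V A) fV) (inv_into (H A) fH) (inv_into (S A) fS)"
proof -
  note M = iso2_byD[OF m] and W = wf2D[OF A]
  show ?thesis
    unfolding iso2_by_def
  proof (intro conjI ballI)
    show "bij_betw (inv_into (V A) fV) (V B) (V A)" "bij_betw (inv_into (H A) fH) (H B) (H A)"
      "bij_betw (inv_into (S A) fS) (S B) (S A)"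
      using M(1-3) by (simp_all add: bij_betw_inv_into)
  next
    fix x assume "x \<in> H B"
    then obtain h where "h \<in> H A" "x = fH h" using M(2) by (auto simp: bij_betw_def)
    then show "inv_into (V A) fV (nu B x) = nu A (inv_into (H A) fH x)"
      "inv_into (H A) fH (iota B x) = iota A (inv_into (H A) fH x)"
      using M W by (auto simp flip: M(4,5) simp: bij_betw_def)
  next
    fix x assume "x \<in> S B"
    then obtain s where "s \<in> S A" "x = fS s" using M(3) by (auto simp: bij_betw_def)
    then show "inv_into (H A) fH (mu B x) = mu A (inv_into (S A) fS x)"
      "inv_into (S A) fS (sig1 B x) = sig1 A (inv_into (S A) fS x)"
      "inv_into (S A) fS (sig2 B x) = sig2 A (inv_into (S A) fS x)"
      using M W by (auto simp flip: M(6,7,8) simp: bij_betw_def)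
  qed
qed

lemma iso2_by_comp:
  assumes "iso2_by A B fV fH fS" "iso2_by B C gV gH gS"
  shows "iso2_by A C (gV \<circ> fV) (gH \<circ> fH) (gS \<circ> fS)"
  using assms unfolding iso2_by_def by (auto intro: bij_betw_trans dest: bij_betw_apply)

lemma iso2_refl: "iso2 G G"
  unfolding iso2_iff_iso2_by iso2_by_def by (intro exI[of _ id]) auto

lemma iso2_sym: "iso2 A B \<Longrightarrow> wf2 A \<Longrightarrow> iso2 B A"
  unfolding iso2_iff_iso2_by using iso2_by_inv by blast

lemma iso2_trans: "iso2 A B \<Longrightarrow> iso2 B C \<Longrightarrow> iso2 A C"
  unfolding iso2_iff_iso2_by using iso2_by_comp by blast

lemma ucls_eq_iff: "wf2 A \<Longrightarrow> wf2 B \<Longrightarrow> ucls A = ucls B \<longleftrightarrow> iso2 A B"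
  unfolding ucls_def using iso2_refl iso2_sym iso2_trans by blast

lemma iso1_sym:
  assumes i: "iso1 g g'" and g: "wf1 g"
  shows "iso1 g' g"
proof -
  obtain fV fH where bV: "bij_betw fV (V1 g) (V1 g')" and bH: "bij_betw fH (H1 g) (H1 g')"
    and hom: "\<forall>h\<in>H1 g. fV (nu1 g h) = nu1 g' (fH h) \<and> fH (iota1 g h) = iota1 g' (fH h)"
    using i unfolding iso1_def by blast
  show ?thesis
    unfolding iso1_def
  proof (intro exI conjI ballI)
    show "bij_betw (inv_into (V1 g) fV) (V1 g') (V1 g)" "bij_betw (inv_into (H1 g) fH) (H1 g') (H1 g)"
      using bV bH by (simp_all add: bij_betw_inv_into)
    fix x assume "x \<in> H1 g'"
    then obtain h where "h \<in> H1 g" "x = fH h" using bH by (auto simp: bij_betw_def)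
    then show "inv_into (V1 g) fV (nu1 g' x) = nu1 g (inv_into (H1 g) fH x)"
      "inv_into (H1 g) fH (iota1 g' x) = iota1 g (inv_into (H1 g) fH x)"
      using bV bH hom g by (auto simp flip: hom[rule_format] simp: bij_betw_def wf1_def)
  qed
qed

lemma iso1_trans: "iso1 g1 g2 \<Longrightarrow> iso1 g2 g3 \<Longrightarrow> iso1 g1 g3"
  unfolding iso1_def
  by (clarify, intro exI[of _ "_ \<circ> _"] conjI) (auto intro: bij_betw_trans dest: bij_betw_apply)

lemma ucls1_eq: "wf1 g \<Longrightarrow> iso1 g g' \<Longrightarrow> ucls1 g = ucls1 g'"
  unfolding ucls1_def using iso1_sym iso1_trans by blast

section \<open>External faces\<close>

definition strand_step :: "graph2 \<Rightarrow> (nat \<times> nat) set" where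
  "strand_step K = {(x, sig1 K x) | x. x \<in> S K} \<union> {(x, sig2 K x) | x. x \<in> S K}"

fun face_walk :: "graph2 \<Rightarrow> nat \<Rightarrow> nat \<Rightarrow> nat" where
  "face_walk K s 0 = s"
| "face_walk K s (Suc n) = (if even n then sig1 K else sig2 K) (face_walk K s n)"

declare face_walk.simps(2) [simp del]

lemma face_walk_in: "wf2 K \<Longrightarrow> s \<in> S K \<Longrightarrow> face_walk K s n \<in> S K"
  by (induction n) (auto simp: face_walk.simps(2) dest: wf2D)

lemma face_walk_back:
  "wf2 K \<Longrightarrow> s \<in> S K \<Longrightarrow> (if even n then sig1 K else sig2 K) (face_walk K s (Suc n)) = face_walk K s n"
  using face_walk_in[of K s n] by (auto simp: face_walk.simps(2) dest: wf2D)

lemma face_walk_strand_step: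
  assumes "wf2 K" "s \<in> S K"
  shows "(s, face_walk K s n) \<in> (strand_step K)\<^sup>*"
proof (induction n)
  case (Suc n)
  have "(face_walk K s n, face_walk K s (Suc n)) \<in> strand_step K"
    using face_walk_in[OF assms, of n] by (auto simp: strand_step_def face_walk.simps(2))
  with Suc show ?case by (rule rtrancl_into_rtrancl)
qed simp

text \<open>A repetition \<open>w i = w j\<close> of the walk, with \<open>j\<close> minimal, can be pushed to a repetition
  with smaller \<open>j\<close> by stepping back from \<open>j\<close> and back or forward from \<open>i\<close> through the same
  involution; the only obstructions are fixed points, which the hypotheses exclude.\<close>
lemma face_walk_distinct:
  assumes K: "wf2 K" and s: "s \<in> S K" "sig2 K s = s"
    and no_stop: "\<forall>k<N. odd k \<longrightarrow> sig2 K (face_walk K s k) \<noteq> face_walk K s k"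
    and ij: "i < j" "j \<le> N"
  shows "face_walk K s i \<noteq> face_walk K s j"
  using ij
proof (induction j arbitrary: i rule: less_induct)
  case (less j)
  let ?w = "face_walk K s" and ?inv = "\<lambda>n. if even n then sig1 K else sig2 K"
  have fwd: "?w (Suc n) = ?inv n (?w n)" and bwd: "?inv n (?w (Suc n)) = ?w n" for n
    using face_walk.simps(2) face_walk_back[OF K s(1)] by blast+
  show ?case
  proof
    assume eq: "?w i = ?w j"
    then obtain j' where j': "j = Suc j'" using less.prems by (cases j) auto
    consider "j = Suc i" | "i > 0" "even (j - i)" | "i = 0" "even j" | "odd (j - i)" "j > Suc i"
      using less.prems by fastforce
    then show False
    proof cases
      case 1
      then show False
        using eq fwd[of i] no_stop less.prems wf2D(10)[OF K face_walk_in[OF K s(1)]]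
        by (cases "even i") (metis Suc_le_lessD)+
    next
      case 2
      then obtain i' where i': "i = Suc i'" by (cases i) auto
      have "?w i' = ?w j'"
        using bwd[of i'] bwd[of j'] eq i' j' 2 less.prems by (simp add: even_diff_nat)
      then show False using less.IH[of j' i'] less.prems i' j' by simp
    next
      case 3
      then have "?w j' = ?w 0"
        using bwd[of j'] eq s(2) j' by simp
      then show False using less.IH[of j' 0] less.prems 3 j' by (cases j') auto
    next
      case 4
      then have "?w (Suc i) = ?w j'"
        using fwd[of i] bwd[of j'] eq j' less.prems by (simp add: even_diff_nat)
      moreover have "Suc i < j'" using 4 j' by presburger
      ultimately show False using less.IH[of j' "Suc i"] less.prems j' by simp
    qed
  qed
qed

lemma face_walk_inj:
  assumes "wf2 K" "s \<in> S K" "sig2 K s = s"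
    and "\<forall>k<N. odd k \<longrightarrow> sig2 K (face_walk K s k) \<noteq> face_walk K s k"
  shows "inj_on (face_walk K s) {..N}"
  by (rule inj_onI) (metis assms atMost_iff face_walk_distinct linorder_neqE_nat)

lemma face_walk_stops:
  assumes K: "wf2 K" and s: "s \<in> S K" "sig2 K s = s"
  shows "\<exists>N. odd N \<and> sig2 K (face_walk K s N) = face_walk K s N"
proof (rule ccontr)
  assume "\<not> ?thesis"
  then have "inj_on (face_walk K s) {..card (S K)}"
    using face_walk_inj[OF K s] by blast
  moreover have "face_walk K s ` {..card (S K)} \<subseteq> S K"
    using face_walk_in[OF K s(1)] by blast
  ultimately show False
    using card_inj_on_le[of "face_walk K s" "{..card (S K)}" "S K"] wf2D(3)[OF K] by simp
qed

definition face_stop :: "graph2 \<Rightarrow> nat \<Rightarrow> nat" where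
  "face_stop K s = (LEAST N. odd N \<and> sig2 K (face_walk K s N) = face_walk K s N)"

lemma face_stop:
  assumes K: "wf2 K" and s: "s \<in> S K" "sig2 K s = s"
  shows "odd (face_stop K s)"
    and "sig2 K (face_walk K s (face_stop K s)) = face_walk K s (face_stop K s)"
    and "inj_on (face_walk K s) {..face_stop K s}"
proof -
  let ?P = "\<lambda>N. odd N \<and> sig2 K (face_walk K s N) = face_walk K s N"
  show "odd (face_stop K s)" "sig2 K (face_walk K s (face_stop K s)) = face_walk K s (face_stop K s)"
    using LeastI_ex[of ?P] face_walk_stops[OF K s] unfolding face_stop_def by blast+
  show "inj_on (face_walk K s) {..face_stop K s}"
    using face_walk_inj[OF K s] not_less_Least[of _ ?P] unfolding face_stop_def by blast
qed

lemma face_walk_closed: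
  assumes K: "wf2 K" and s: "s \<in> S K" "sig2 K s = s"
    and x: "x \<in> face_walk K s ` {..face_stop K s}" and \<sigma>: "\<sigma> = sig1 K \<or> \<sigma> = sig2 K"
  shows "\<sigma> x \<in> face_walk K s ` {..face_stop K s}"
proof -
  let ?w = "face_walk K s" and ?N = "face_stop K s"
  obtain k where k: "k \<le> ?N" "x = ?w k" using x by auto
  consider "\<sigma> = (if even k then sig1 K else sig2 K)" | "k > 0" "\<sigma> = (if odd k then sig1 K else sig2 K)"
    | "k = 0" "\<sigma> = sig2 K"
    using \<sigma> by (cases "k = 0"; cases "even k") auto
  then show ?thesis
  proof cases
    case 1
    show ?thesis
    proof (cases "k = ?N")
      case True
      then show ?thesis using 1 face_stop(1,2)[OF K s] k by auto
    next
      case False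
      then have "Suc k \<in> {..?N}" using k by simp
      then show ?thesis using 1 k by (force simp: face_walk.simps(2))
    qed
  next
    case 2
    then obtain j where "k = Suc j" by (cases k) auto
    then show ?thesis using 2 k face_walk_back[OF K s(1), of j] by force
  next
    case 3
    then show ?thesis using x k s by auto
  qed
qed

lemma face_orbit_subset_walk:
  assumes K: "wf2 K" and s: "s \<in> S K" "sig2 K s = s" and r: "(s, t) \<in> (strand_step K)\<^sup>*"
  shows "t \<in> face_walk K s ` {..face_stop K s}"
  using r
proof (induction rule: rtrancl_induct)
  case base
  show ?case using image_eqI[of s "face_walk K s" 0] by simp
next
  case (step y z)
  then show ?case using face_walk_closed[OF K s step.IH] by (auto simp: strand_step_def)
qed

definition face_partner :: "graph2 \<Rightarrow> nat \<Rightarrow> nat \<Rightarrow> bool" where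
  "face_partner K s t \<longleftrightarrow> t \<in> S K \<and> t \<noteq> s \<and> sig2 K t = t \<and> (s, t) \<in> (strand_step K)\<^sup>*"

lemma face_partner_walk_end:
  assumes K: "wf2 K" and s: "s \<in> S K" "sig2 K s = s"
  shows "face_partner K s t \<longleftrightarrow> t = face_walk K s (face_stop K s)"
proof
  let ?w = "face_walk K s" and ?N = "face_stop K s"
  note stop = face_stop[OF K s]
  assume t: "face_partner K s t"
  then obtain k where k: "k \<le> ?N" "t = ?w k"
    using face_orbit_subset_walk[OF K s] unfolding face_partner_def by blast
  have fixed: "sig2 K (?w k) = ?w k" "?w k \<noteq> s" using t k unfolding face_partner_def by auto
  show "t = ?w ?N"
  proof (rule ccontr)
    assume "t \<noteq> ?w ?N"
    then have "k < ?N" using k by (cases "k = ?N") auto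
    consider "odd k" | "k = 0" | j where "k = Suc j" "odd j"
      by (cases k) auto
    then show False
    proof cases
      case 1
      then have "?w (Suc k) = ?w k" using fixed by (simp add: face_walk.simps(2))
      then show False using inj_onD[OF stop(3), of "Suc k" k] \<open>k < ?N\<close> by simp
    next
      case 2
      then show False using fixed by simp
    next
      case 3
      then have "?w j = ?w k" using fixed face_walk_back[OF K s(1), of j] by simp
      then show False using inj_onD[OF stop(3), of j k] \<open>k < ?N\<close> 3 by simp
    qed
  qed
next
  let ?w = "face_walk K s" and ?N = "face_stop K s"
  note stop = face_stop[OF K s]
  assume t: "t = ?w ?N"
  have "?w ?N \<noteq> ?w 0" using inj_onD[OF stop(3), of ?N 0] stop(1) by (auto simp: odd_pos)
  then show "face_partner K s t"
    unfolding face_partner_def t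
    using face_walk_in[OF K s(1)] stop(2) face_walk_strand_step[OF K s(1)] by simp
qed

lemma face_walk_ext_face:
  assumes K: "wf2 K" and s: "s \<in> S K" "sig2 K s = s"
  shows "ext_face K (map (face_walk K s) [0..<Suc (face_stop K s)])"
proof -
  let ?N = "face_stop K s"
  let ?xs = "map (face_walk K s) [0..<Suc ?N]"
  note stop = face_stop[OF K s]
  have "distinct ?xs"
    using stop(3) by (simp add: distinct_map atLeast0LessThan lessThan_Suc_atMost del: upt_Suc)
  moreover have "set ?xs \<subseteq> S K" using face_walk_in[OF K s(1)] by auto
  moreover have "?xs ! (2*i+1) = sig1 K (?xs ! (2*i))" if "2*i+1 < length ?xs" for i
    using that by (simp add: face_walk.simps(2) del: upt_Suc)
  moreover have "?xs ! (2*i+2) = sig2 K (?xs ! (2*i+1))" if "2*i+2 < length ?xs" for i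
    using that face_walk.simps(2)[of K s "2*i+1"] by (simp del: upt_Suc face_walk.simps)
  moreover have "hd ?xs = s" "last ?xs = face_walk K s ?N"
    by (simp_all add: hd_map last_map del: upt_Suc)
  ultimately show ?thesis
    unfolding ext_face_def using stop(1,2) s(2) by (auto simp del: upt_Suc)
qed

lemma ext_face_strand_steps:
  assumes xs: "ext_face K xs" and k: "k < length xs"
  shows "(hd xs, xs ! k) \<in> (strand_step K)\<^sup>*"
  using k
proof (induction k)
  case 0
  then show ?case using xs by (simp add: ext_face_def hd_conv_nth)
next
  case (Suc k)
  have in_S: "xs ! k \<in> S K" using Suc.prems xs unfolding ext_face_def by auto
  have "xs ! Suc k = sig1 K (xs ! k) \<or> xs ! Suc k = sig2 K (xs ! k)"
  proof (cases "even k")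
    case True
    then obtain i where "k = 2*i" by blast
    then show ?thesis using xs Suc.prems unfolding ext_face_def by auto
  next
    case False
    then obtain i where "k = 2*i+1" by (blast elim: oddE)
    then have "Suc k = 2*i+2" "k = 2*i+1" by simp_all
    then show ?thesis using xs Suc.prems unfolding ext_face_def by metis
  qed
  then have "(xs ! k, xs ! Suc k) \<in> strand_step K" using in_S by (auto simp: strand_step_def)
  then show ?case using Suc by (meson Suc_lessD rtrancl_into_rtrancl)
qed

lemma ext_face_partner:
  assumes xs: "ext_face K xs"
  shows "face_partner K (hd xs) (last xs)"
proof -
  have ne: "xs \<noteq> []" and ev: "even (length xs)" and "distinct xs"
    and "set xs \<subseteq> S K" "sig2 K (last xs) = last xs"
    using xs unfolding ext_face_def by auto
  have "length xs \<ge> 2" using ne ev by (cases xs) (auto simp: Suc_le_eq odd_pos)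
  then have "xs ! (length xs - 1) \<noteq> xs ! 0"
    using nth_eq_iff_index_eq[OF \<open>distinct xs\<close>, of "length xs - 1" 0] ne by simp
  moreover have "last xs = xs ! (length xs - 1)" "hd xs = xs ! 0"
    using ne by (simp_all add: last_conv_nth hd_conv_nth)
  ultimately show ?thesis
    using ext_face_strand_steps[OF xs, of "length xs - 1"] ne \<open>set xs \<subseteq> S K\<close> \<open>sig2 K (last xs) = last xs\<close>
    unfolding face_partner_def by auto
qed

definition face_end :: "graph2 \<Rightarrow> nat \<Rightarrow> nat" where
  "face_end K s = (THE t. \<exists>xs. ext_face K xs \<and> hd xs = s \<and> last xs = t)"

lemma face_end_iff:
  assumes K: "wf2 K" and s: "s \<in> S K" "sig2 K s = s"
  shows "face_end K s = t \<longleftrightarrow> face_partner K s t"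
proof -
  let ?xs = "map (face_walk K s) [0..<Suc (face_stop K s)]"
  have "\<exists>xs. ext_face K xs \<and> hd xs = s \<and> last xs = face_walk K s (face_stop K s)"
    using face_walk_ext_face[OF K s] by (intro exI[of _ ?xs]) (simp add: hd_map last_map del: upt_Suc)
  moreover have "t' = face_walk K s (face_stop K s)"
    if "\<exists>xs. ext_face K xs \<and> hd xs = s \<and> last xs = t'" for t'
    using that ext_face_partner face_partner_walk_end[OF K s] by blast
  ultimately have "face_end K s = face_walk K s (face_stop K s)"
    unfolding face_end_def by (rule the_equality)
  then show ?thesis using face_partner_walk_end[OF K s] by auto
qed

lemma face_partner_face_end:
  "wf2 K \<Longrightarrow> s \<in> S K \<Longrightarrow> sig2 K s = s \<Longrightarrow> face_partner K s (face_end K s)"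
  using face_end_iff by blast

lemma strand_step_sym: "wf2 K \<Longrightarrow> sym (strand_step K)"
  unfolding sym_def strand_step_def by (fastforce dest: wf2D)

lemma face_end_face_end:
  assumes K: "wf2 K" and s: "s \<in> S K" "sig2 K s = s"
  shows "face_end K (face_end K s) = s"
proof -
  have "face_partner K s (face_end K s)" using face_partner_face_end[OF K s] .
  then have "face_partner K (face_end K s) s"
    using s symD[OF sym_rtrancl[OF strand_step_sym[OF K]]] unfolding face_partner_def by auto
  then show ?thesis using face_end_iff[OF K] unfolding face_partner_def by blast
qed

lemma Union_edgesD:
  assumes G: "wf2 G" and F: "F \<subseteq> edges G" and h: "h \<in> \<Union>F"
  shows "h \<in> H G" "iota G h \<in> \<Union>F" "iota G h \<noteq> h"
proof -
  obtain h0 where "h \<in> {h0, iota G h0}" "{h0, iota G h0} \<in> F" "h0 \<in> H G" "iota G h0 \<noteq> h0"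
    using F h unfolding edges_def by blast
  then show "h \<in> H G" "iota G h \<in> \<Union>F" "iota G h \<noteq> h"
    using wf2D(5,6)[OF G] by auto
qed

lemma subg_simps [simp]:
  "V (subg G F) = V G" "H (subg G F) = H G" "S (subg G F) = S G" "nu (subg G F) = nu G"
  "mu (subg G F) = mu G" "sig1 (subg G F) = sig1 G"
  "iota (subg G F) = (\<lambda>h. if h \<in> \<Union>F then iota G h else h)"
  "sig2 (subg G F) = (\<lambda>s. if mu G s \<in> \<Union>F then sig2 G s else s)"
  unfolding subg_def by simp_all

lemma wf2_subg:
  assumes G: "wf2 G" and F: "F \<subseteq> edges G"
  shows "wf2 (subg G F)"
proof -
  note W = wf2D[OF G] and E = Union_edgesD[OF G F]
  have "mu G (sig2 G s) \<in> \<Union>F \<longleftrightarrow> mu G s \<in> \<Union>F" if "s \<in> S G" for s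
    using E(2)[of "mu G s"] E(2)[of "iota G (mu G s)"] W(6)[OF W(7)[OF that]] W(14)[OF that]
    by metis
  then show ?thesis
    by (intro wf2I) (auto simp: W E simp del: Union_iff)
qed

lemma adj_subset: "wf2 K \<Longrightarrow> adj K \<subseteq> V K \<times> V K"
  unfolding adj_def by (auto dest: wf2D)

lemma adj_sym: "wf2 K \<Longrightarrow> sym (adj K)"
  unfolding adj_def sym_def by (fastforce dest: wf2D)

lemma adj_rtrancl_sym: "wf2 K \<Longrightarrow> (v, w) \<in> (adj K)\<^sup>* \<Longrightarrow> (w, v) \<in> (adj K)\<^sup>*"
  using adj_sym sym_rtrancl symD by metis

lemma comp_subset: "comp K v \<subseteq> V K"
  unfolding comp_def by auto

lemma comp_eq_iff:
  assumes K: "wf2 K" and "v \<in> V K" "w \<in> V K"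
  shows "comp K v = comp K w \<longleftrightarrow> (v, w) \<in> (adj K)\<^sup>*"
  using assms adj_rtrancl_sym[OF K] unfolding comp_def
  by (auto intro: rtrancl_trans)

lemma Min_comp:
  assumes K: "wf2 K" and v: "v \<in> V K"
  shows "Min (comp K v) \<in> V K" "(v, Min (comp K v)) \<in> (adj K)\<^sup>*"
proof -
  have "finite (comp K v)" using finite_subset[OF comp_subset wf2D(1)[OF K]] .
  moreover have "v \<in> comp K v" using v unfolding comp_def by simp
  ultimately have "Min (comp K v) \<in> comp K v" by (intro Min_in) auto
  then show "Min (comp K v) \<in> V K" "(v, Min (comp K v)) \<in> (adj K)\<^sup>*"
    unfolding comp_def by auto
qed

lemma Min_comp_eq_iff:
  assumes K: "wf2 K" and v: "v \<in> V K" and w: "w \<in> V K"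
  shows "Min (comp K v) = Min (comp K w) \<longleftrightarrow> (v, w) \<in> (adj K)\<^sup>*"
proof -
  have "comp K (Min (comp K u)) = comp K u" if "u \<in> V K" for u
    using comp_eq_iff[OF K] Min_comp[OF K that] that by metis
  then show ?thesis
    using comp_eq_iff[OF K v w] v w by metis
qed

lemma contr_simps:
  "V (contr G F) = Min ` comps (subg G F)"
  "H (contr G F) = {h \<in> H G. iota (subg G F) h = h}"
  "S (contr G F) = {s \<in> S G. sig2 (subg G F) s = s}"
  "nu (contr G F) = (\<lambda>h. Min (comp (subg G F) (nu G h)))"
  "iota (contr G F) = iota G" "mu (contr G F) = mu G" "sig2 (contr G F) = sig2 G"
  "sig1 (contr G F) = face_end (subg G F)"
  unfolding contr_def Let_def face_end_def by simp_all

lemma V_contr: "V (contr G F) = (\<lambda>v. Min (comp (subg G F) v)) ` V G"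
  unfolding contr_simps comps_def by auto

lemma H_contr:
  assumes G: "wf2 G" and F: "F \<subseteq> edges G"
  shows "H (contr G F) = {h \<in> H G. h \<notin> \<Union>F}"
  unfolding contr_simps using Union_edgesD[OF G F] by auto

lemma sig2_subg_fixed_iff:
  assumes G: "wf2 G" and F: "F \<subseteq> edges G" and s: "s \<in> S G"
  shows "sig2 (subg G F) s = s \<longleftrightarrow> mu G s \<notin> \<Union>F"
  using Union_edgesD(3)[OF G F] wf2D(15)[OF G s] by auto

lemma S_contr:
  assumes G: "wf2 G" and F: "F \<subseteq> edges G"
  shows "S (contr G F) = {s \<in> S G. mu G s \<notin> \<Union>F}"
  unfolding contr_simps(3) using sig2_subg_fixed_iff[OF G F] by blast

text \<open>Each strand step of a subgraph stays at one vertex or crosses one of its edges.\<close>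
lemma strand_steps_adj:
  assumes G: "wf2 G" and F: "F \<subseteq> edges G"
    and r: "(s, t) \<in> (strand_step (subg G F))\<^sup>*"
  shows "(nu G (mu G s), nu G (mu G t)) \<in> (adj (subg G F))\<^sup>*"
  using r
proof (induction rule: rtrancl_induct)
  case (step y z)
  note W = wf2D[OF G]
  have y: "y \<in> S G" and z: "z = sig1 G y \<or> z = sig2 (subg G F) y"
    using step(2) unfolding strand_step_def by (auto simp del: subg_simps(8))
  consider "z = sig1 G y" | "z = y" | "mu G y \<in> \<Union>F" "z = sig2 G y"
    using z unfolding subg_simps by metis
  then have "nu G (mu G y) = nu G (mu G z) \<or> (nu G (mu G y), nu G (mu G z)) \<in> adj (subg G F)"
  proof cases
    case 3
    let ?h = "mu G y"
    have "?h \<in> H (subg G F)" "iota (subg G F) ?h \<noteq> ?h" "iota (subg G F) ?h = mu G z"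
      using 3 W(7,14)[OF y] Union_edgesD(3)[OF G F] by (simp_all del: Union_iff) metis
    then have "(nu G ?h, nu G (mu G z)) \<in> adj (subg G F)"
      unfolding adj_def by (metis (mono_tags, lifting) mem_Collect_eq subg_simps(4))
    then show ?thesis by simp
  qed (use W(11)[OF y] in auto)
  then show ?case using step.IH by (metis rtrancl.rtrancl_into_rtrancl)
qed simp

lemma face_end_same_comp:
  assumes G: "wf2 G" and F: "F \<subseteq> edges G" and s: "s \<in> S (subg G F)" "sig2 (subg G F) s = s"
  shows "Min (comp (subg G F) (nu G (mu G (face_end (subg G F) s)))) = Min (comp (subg G F) (nu G (mu G s)))"
proof -
  let ?K = "subg G F"
  have K: "wf2 ?K" using wf2_subg[OF G F] .
  have t: "face_partner ?K s (face_end ?K s)" by (rule face_partner_face_end[OF K s])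
  then have "(nu G (mu G (face_end ?K s)), nu G (mu G s)) \<in> (adj ?K)\<^sup>*"
    using strand_steps_adj[OF G F] adj_rtrancl_sym[OF K] unfolding face_partner_def by blast
  then show ?thesis
    using Min_comp_eq_iff[OF K] t wf2D(4,7)[OF G] s(1) unfolding face_partner_def by simp
qed

lemma wf2_contr:
  assumes G: "wf2 G" and F: "F \<subseteq> edges G"
  shows "wf2 (contr G F)"
proof (rule wf2I)
  note W = wf2D[OF G] and E = Union_edgesD[OF G F]
  note HC = H_contr[OF G F] and SC = S_contr[OF G F]
  show "finite (V (contr G F))" "finite (H (contr G F))" "finite (S (contr G F))"
    using W unfolding V_contr HC SC by simp_all
  fix h assume "h \<in> H (contr G F)"
  then have h: "h \<in> H G" "h \<notin> \<Union>F" using HC by auto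
  then have "iota G h \<notin> \<Union>F" using E(2)[of "iota G h"] W(6) by auto
  then show "nu (contr G F) h \<in> V (contr G F)" "iota (contr G F) h \<in> H (contr G F)"
    "iota (contr G F) (iota (contr G F) h) = h"
    using W h unfolding V_contr HC by (auto simp: contr_simps)
next
  let ?K = "subg G F"
  note W = wf2D[OF G] and E = Union_edgesD[OF G F]
  have K: "wf2 ?K" using wf2_subg[OF G F] .
  note SC = S_contr[OF G F]
  fix s assume "s \<in> S (contr G F)"
  then have s: "s \<in> S G" "mu G s \<notin> \<Union>F" using SC by auto
  have sK: "s \<in> S ?K" "sig2 ?K s = s" using s by auto
  have t: "face_partner ?K s (face_end ?K s)" by (rule face_partner_face_end[OF K sK])
  note face_end_face_end[OF K sK] face_end_same_comp[OF G F sK]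
  moreover have "mu G (sig2 G s) \<notin> \<Union>F" using E(2)[of "mu G (sig2 G s)"] W s by auto
  moreover have "face_end ?K s \<in> S (contr G F)"
    using t unfolding face_partner_def contr_simps by simp
  ultimately show "mu (contr G F) s \<in> H (contr G F)" "sig1 (contr G F) s \<in> S (contr G F)"
    "sig1 (contr G F) (sig1 (contr G F) s) = s" "sig1 (contr G F) s \<noteq> s"
    "nu (contr G F) (mu (contr G F) (sig1 (contr G F) s)) = nu (contr G F) (mu (contr G F) s)"
    "sig2 (contr G F) s \<in> S (contr G F)" "sig2 (contr G F) (sig2 (contr G F) s) = s"
    "iota (contr G F) (mu (contr G F) s) = mu (contr G F) (sig2 (contr G F) s)"
    "sig2 (contr G F) s = s \<longleftrightarrow> iota (contr G F) (mu (contr G F) s) = mu (contr G F) s"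
    using t W s unfolding face_partner_def H_contr[OF G F] SC by (auto simp: contr_simps)
qed

section \<open>Contraction respects isomorphism\<close>

lemma bij_betw_restrict_iff:
  assumes "bij_betw f A B" and "\<And>x. x \<in> A \<Longrightarrow> Q (f x) \<longleftrightarrow> P x"
  shows "bij_betw f {x \<in> A. P x} {y \<in> B. Q y}"
  using assms unfolding bij_betw_def inj_on_def by (auto 0 3)

lemma iso2_contrI:
  assumes G: "wf2 G" and F: "F \<subseteq> edges G"
    and bH: "bij_betw fH (H (contr G F)) (H C)" and bS: "bij_betw fS (S (contr G F)) (S C)"
    and \<psi>: "\<psi> ` V G = V C"
    and \<psi>_eq: "\<And>u w. u \<in> V G \<Longrightarrow> w \<in> V G \<Longrightarrow> \<psi> u = \<psi> w \<longleftrightarrow> (u, w) \<in> (adj (subg G F))\<^sup>*"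
    and nu: "\<And>h. h \<in> H (contr G F) \<Longrightarrow> nu C (fH h) = \<psi> (nu G h)"
    and iota: "\<And>h. h \<in> H (contr G F) \<Longrightarrow> fH (iota G h) = iota C (fH h)"
    and mu: "\<And>s. s \<in> S (contr G F) \<Longrightarrow> fH (mu G s) = mu C (fS s)"
    and sig1: "\<And>s. s \<in> S (contr G F) \<Longrightarrow> fS (face_end (subg G F) s) = sig1 C (fS s)"
    and sig2: "\<And>s. s \<in> S (contr G F) \<Longrightarrow> fS (sig2 G s) = sig2 C (fS s)"
  shows "iso2 (contr G F) C"
proof -
  let ?K = "subg G F"
  have K: "wf2 ?K" using wf2_subg[OF G F] .
  have \<psi>_Min: "\<psi> (Min (comp ?K u)) = \<psi> u" if "u \<in> V G" for u
    using \<psi>_eq Min_comp[OF K] that adj_rtrancl_sym[OF K] by simp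
  have "bij_betw \<psi> (V (contr G F)) (V C)"
  proof (rule bij_betw_imageI)
    show "inj_on \<psi> (V (contr G F))"
      unfolding V_contr using \<psi>_Min \<psi>_eq Min_comp_eq_iff[OF K] by (auto intro!: inj_onI)
    show "\<psi> ` V (contr G F) = V C"
      unfolding V_contr image_image using \<psi>_Min \<psi> by simp
  qed
  moreover have "\<psi> (nu (contr G F) h) = nu C (fH h)" if "h \<in> H (contr G F)" for h
    using that \<psi>_Min nu wf2D(4)[OF G] by (simp add: contr_simps)
  ultimately show ?thesis
    unfolding iso2_def using bH bS iota mu sig1 sig2
    by (intro exI[of _ \<psi>] exI[of _ fH] exI[of _ fS]) (simp add: contr_simps)
qed

lemma rtrancl_map:
  assumes "\<And>x y. (x, y) \<in> R \<Longrightarrow> (f x, f y) \<in> R'\<^sup>*" and "(x, y) \<in> R\<^sup>*"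
  shows "(f x, f y) \<in> R'\<^sup>*"
  using assms(2) by induction (auto intro: rtrancl_trans assms(1))

lemma rtrancl_map_prod_image:
  "(x, y) \<in> R\<^sup>* \<Longrightarrow> (f x, f y) \<in> (map_prod f f ` R)\<^sup>*"
  by (rule rtrancl_map) auto

lemma rtrancl_map_prod_image_iff:
  assumes inj: "inj_on f A" and R: "R \<subseteq> A \<times> A" and x: "x \<in> A" and y: "y \<in> A"
  shows "(f x, f y) \<in> (map_prod f f ` R)\<^sup>* \<longleftrightarrow> (x, y) \<in> R\<^sup>*"
proof
  have "\<exists>y\<in>A. y' = f y \<and> (x, y) \<in> R\<^sup>*" if "(f x, y') \<in> (map_prod f f ` R)\<^sup>*" for y'
    using that
  proof (induction rule: rtrancl_induct)
    case base
    then show ?case using x by blast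
  next
    case (step y' z')
    then obtain y a b where "y \<in> A" "y' = f y" "(x, y) \<in> R\<^sup>*" "(a, b) \<in> R" "y' = f a" "z' = f b"
      by auto
    moreover from this have "a = y" using inj R by (auto dest: inj_onD)
    ultimately show ?case using R by (auto intro: rtrancl_into_rtrancl)
  qed
  then show "(f x, f y) \<in> (map_prod f f ` R)\<^sup>* \<Longrightarrow> (x, y) \<in> R\<^sup>*"
    using inj y by (auto dest: inj_onD)
qed (rule rtrancl_map_prod_image)

lemma iso2_by_adj:
  assumes m: "iso2_by A B fV fH fS" and A: "wf2 A"
  shows "adj B = map_prod fV fV ` adj A"
proof -
  note M = iso2_byD[OF m]
  have "h \<in> H A \<Longrightarrow> iota B (fH h) = fH h \<longleftrightarrow> iota A h = h" for h
    using M(2,5) wf2D(5)[OF A] by (metis bij_betw_iff_bijections)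
  moreover have "H B = fH ` H A" using M(2) by (simp add: bij_betw_def)
  ultimately show ?thesis
    unfolding adj_def using M(4,5) wf2D(5)[OF A] by (auto simp: image_iff) metis+
qed

lemma iso2_by_adj_rtrancl_iff:
  assumes m: "iso2_by A B fV fH fS" and A: "wf2 A" and "u \<in> V A" "w \<in> V A"
  shows "(fV u, fV w) \<in> (adj B)\<^sup>* \<longleftrightarrow> (u, w) \<in> (adj A)\<^sup>*"
  unfolding iso2_by_adj[OF m A]
  by (rule rtrancl_map_prod_image_iff[OF bij_betw_imp_inj_on[OF iso2_byD(1)[OF m]]
        adj_subset[OF A] assms(3,4)])

lemma iso2_by_edges:
  assumes m: "iso2_by A B fV fH fS" and A: "wf2 A" and F: "F \<subseteq> edges A"
  shows "image fH ` F \<subseteq> edges B"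
proof
  note M = iso2_byD[OF m]
  fix e' assume "e' \<in> image fH ` F"
  then obtain h where h: "e' = {fH h, fH (iota A h)}" "h \<in> H A" "iota A h \<noteq> h"
    using F unfolding edges_def by blast
  then have "fH (iota A h) \<noteq> fH h"
    using M(2) wf2D(5)[OF A] by (metis bij_betw_iff_bijections)
  then show "e' \<in> edges B"
    unfolding edges_def using h M(2,5) by (auto intro: bij_betw_apply)
qed

lemma iso2_by_subg:
  assumes m: "iso2_by A B fV fH fS" and A: "wf2 A" and F: "F \<subseteq> edges A"
  shows "iso2_by (subg A F) (subg B (image fH ` F)) fV fH fS"
proof -
  note M = iso2_byD[OF m]
  define F' where "F' = image fH ` F"
  have mem: "fH h \<in> \<Union>F' \<longleftrightarrow> h \<in> \<Union>F" if "h \<in> H A" for h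
    unfolding F'_def using that M(2) Union_edgesD(1)[OF A F] by (auto simp: bij_betw_def dest: inj_onD)
  have "fH (iota (subg A F) h) = iota (subg B F') (fH h)" if "h \<in> H A" for h
    using mem[OF that] M(5)[OF that] by (simp del: Union_iff)
  moreover have "fS (sig2 (subg A F) s) = sig2 (subg B F') (fS s)" if "s \<in> S A" for s
    using mem[OF wf2D(7)[OF A that]] M(6,8)[OF that] by (simp del: Union_iff)
  ultimately show ?thesis
    using m unfolding iso2_by_def F'_def[symmetric] by simp
qed

definition strand_embedding :: "graph2 \<Rightarrow> graph2 \<Rightarrow> (nat \<Rightarrow> nat) \<Rightarrow> bool" where
  "strand_embedding A B f \<longleftrightarrow> inj_on f (S A) \<and> f ` S A \<subseteq> S B
     \<and> (\<forall>s\<in>S A. f (sig1 A s) = sig1 B (f s) \<and> f (sig2 A s) = sig2 B (f s))"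

lemma iso2_by_strand_embedding: "iso2_by A B fV fH fS \<Longrightarrow> strand_embedding A B fS"
  unfolding strand_embedding_def iso2_by_def bij_betw_def by auto

lemma strand_embedding_strand_steps:
  assumes f: "strand_embedding A B f" and "(s, t) \<in> (strand_step A)\<^sup>*"
  shows "(f s, f t) \<in> (strand_step B)\<^sup>*"
proof -
  have "map_prod f f ` strand_step A \<subseteq> strand_step B"
    using f unfolding strand_embedding_def strand_step_def by auto
  then show ?thesis using rtrancl_map_prod_image[OF assms(2)] rtrancl_mono by blast
qed

lemma strand_embedding_face_end:
  assumes f: "strand_embedding A B f" and A: "wf2 A" and B: "wf2 B"
    and s: "s \<in> S A" "sig2 A s = s"
  shows "face_end B (f s) = f (face_end A s)"
proof -
  have t: "face_partner A s (face_end A s)" using face_partner_face_end[OF A s] .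
  then have "face_partner B (f s) (f (face_end A s))"
    using f s strand_embedding_strand_steps[OF f] unfolding face_partner_def strand_embedding_def
    by (auto dest: inj_onD)
  moreover have "f s \<in> S B" "sig2 B (f s) = f s"
    using f s unfolding strand_embedding_def by auto
  ultimately show ?thesis using face_end_iff[OF B] by blast
qed

lemma iso2_by_contr:
  assumes m: "iso2_by A B fV fH fS" and A: "wf2 A" and B: "wf2 B" and F: "F \<subseteq> edges A"
  shows "iso2 (contr A F) (contr B (image fH ` F))"
proof -
  define F' where "F' = image fH ` F"
  let ?K = "subg A F" and ?K' = "subg B F'"
  note M = iso2_byD[OF m]
  have F': "F' \<subseteq> edges B" unfolding F'_def by (rule iso2_by_edges[OF m A F])
  have mK: "iso2_by ?K ?K' fV fH fS" unfolding F'_def by (rule iso2_by_subg[OF m A F])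
  have K: "wf2 ?K" and K': "wf2 ?K'" using wf2_subg A B F F' by blast+
  note MK = iso2_byD[OF mK]
  show ?thesis
    unfolding F'_def[symmetric]
  proof (rule iso2_contrI[OF A F, where \<psi> = "\<lambda>u. Min (comp ?K' (fV u))"])
    show "bij_betw fH (H (contr A F)) (H (contr B F'))"
      unfolding contr_simps(2) using M(2) MK(2,5) wf2D(5)[OF K]
      by (intro bij_betw_restrict_iff) (simp_all del: subg_simps(7), metis bij_betw_iff_bijections)
    show "bij_betw fS (S (contr A F)) (S (contr B F'))"
      unfolding contr_simps(3) using M(3) MK(3,8) wf2D(12)[OF K]
      by (intro bij_betw_restrict_iff) (simp_all del: subg_simps(8), metis bij_betw_iff_bijections)
    show "(\<lambda>u. Min (comp ?K' (fV u))) ` V A = V (contr B F')"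
      using M(1) unfolding V_contr bij_betw_def by (metis image_image)
    fix u w assume "u \<in> V A" "w \<in> V A"
    then show "Min (comp ?K' (fV u)) = Min (comp ?K' (fV w)) \<longleftrightarrow> (u, w) \<in> (adj ?K)\<^sup>*"
      using Min_comp_eq_iff[OF K'] iso2_by_adj_rtrancl_iff[OF mK K] M(1) by (simp add: bij_betw_apply)
  next
    fix h assume "h \<in> H (contr A F)"
    then show "nu (contr B F') (fH h) = Min (comp ?K' (fV (nu A h)))"
      "fH (iota A h) = iota (contr B F') (fH h)"
      using M(4,5) by (simp_all add: contr_simps)
  next
    fix s assume "s \<in> S (contr A F)"
    then have "s \<in> S ?K" "sig2 ?K s = s" by (simp_all add: contr_simps)
    then show "fH (mu A s) = mu (contr B F') (fS s)" "fS (sig2 A s) = sig2 (contr B F') (fS s)"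
      "fS (face_end ?K s) = sig1 (contr B F') (fS s)"
      using M(6,8) strand_embedding_face_end[OF iso2_by_strand_embedding[OF mK] K K']
      by (simp_all add: contr_simps)
  qed
qed

lemma iso2_subg_contr:
  assumes "iso2 A B" "wf2 A" "wf2 B" "F \<subseteq> edges A"
  shows "\<exists>F'. F' \<subseteq> edges B \<and> iso2 (subg A F) (subg B F') \<and> iso2 (contr A F) (contr B F')"
  using assms iso2_by_edges iso2_by_subg iso2_by_contr unfolding iso2_iff_iso2_by by meson

section \<open>Contraction in two steps\<close>

lemma edges_contr:
  assumes G: "wf2 G" and F: "F \<subseteq> edges G"
  shows "edges (contr G F) = {e \<in> edges G. e \<inter> \<Union>F = {}}"
proof -
  have "iota G h \<notin> \<Union>F \<longleftrightarrow> h \<notin> \<Union>F" if "h \<in> H G" for h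
    using that Union_edgesD(2)[OF G F] wf2D(6)[OF G] by metis
  then show ?thesis
    unfolding edges_def H_contr[OF G F] contr_simps(5) by (auto simp del: Union_iff)
qed

lemma subg_subg: "\<Union>F \<subseteq> \<Union>F' \<Longrightarrow> subg (subg G F') F = subg G F"
  by (rule graph2.equality) (auto simp: subg_def fun_eq_iff simp del: Union_iff)

lemma adj_subg:
  assumes G: "wf2 G" and F: "F \<subseteq> edges G"
  shows "adj (subg G F) = {(nu G h, nu G (iota G h)) | h. h \<in> \<Union>F}"
  unfolding adj_def using Union_edgesD[OF G F] by (auto simp del: Union_iff)

lemma edges_subg:
  assumes G: "wf2 G" and F: "F \<subseteq> edges G"
  shows "edges (subg G F) = F"
proof -
  have edge_of: "{h, iota G h} \<in> F" if h: "h \<in> X" and X: "X \<in> F" for h X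
  proof -
    obtain h0 where "X = {h0, iota G h0}" "h0 \<in> H G" using X F unfolding edges_def by blast
    then show ?thesis using h X wf2D(6)[OF G] by (auto simp: insert_commute)
  qed
  show ?thesis
  proof
    show "edges (subg G F) \<subseteq> F"
    proof
      fix e assume "e \<in> edges (subg G F)"
      then obtain h where "e = {h, iota (subg G F) h}" "iota (subg G F) h \<noteq> h"
        unfolding edges_def by auto
      then have "h \<in> \<Union>F" "e = {h, iota G h}" by (auto split: if_splits simp del: Union_iff)
      then show "e \<in> F" using edge_of by blast
    qed
    show "F \<subseteq> edges (subg G F)"
    proof
      fix e assume e: "e \<in> F"
      then obtain h where "e = {h, iota G h}" "h \<in> H G" "iota G h \<noteq> h"
        using F unfolding edges_def by blast
      moreover have "h \<in> \<Union>F" using e \<open>e = {h, iota G h}\<close> by blast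
      ultimately show "e \<in> edges (subg G F)" unfolding edges_def by auto
    qed
  qed
qed

lemma contr_subg_iso:
  assumes G: "wf2 G" and F: "F \<subseteq> edges G" and F2: "F2 \<subseteq> edges (contr G F)"
  shows "iso2 (contr (subg G (F \<union> F2)) F) (subg (contr G F) F2)"
proof -
  let ?G' = "subg G (F \<union> F2)"
  have KK: "subg ?G' F = subg G F" by (rule subg_subg) blast
  have V: "V (contr ?G' F) = V (subg (contr G F) F2)"
    and H: "H (contr ?G' F) = H (subg (contr G F) F2)"
    and S: "S (contr ?G' F) = S (subg (contr G F) F2)"
    by (simp_all only: contr_simps KK subg_simps(1-3))
  have "iota ?G' h = iota (subg (contr G F) F2) h" if "h \<in> H (contr G F)" for h
    using that H_contr[OF G F] by (simp add: contr_simps)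
  moreover have "sig2 ?G' s = sig2 (subg (contr G F) F2) s" if "s \<in> S (contr G F)" for s
    using that S_contr[OF G F] by (simp add: contr_simps)
  ultimately show ?thesis
    unfolding iso2_def V H S
    by (intro exI[of _ id]) (simp add: contr_simps KK del: subg_simps(7,8))
qed

lemma adj_subg_mono:
  assumes G: "wf2 G" and F': "F' \<subseteq> edges G" and "F \<subseteq> F'"
  shows "adj (subg G F) \<subseteq> adj (subg G F')"
  unfolding adj_subg[OF G F'] adj_subg[OF G order_trans[OF assms(3) F']] using assms(3) by blast

lemma adj_subg_contr:
  assumes G: "wf2 G" and F: "F \<subseteq> edges G" and F2: "F2 \<subseteq> edges (contr G F)"
  shows "adj (subg (contr G F) F2)
    = {(Min (comp (subg G F) (nu G h)), Min (comp (subg G F) (nu G (iota G h)))) | h. h \<in> \<Union>F2}"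
  unfolding adj_subg[OF wf2_contr[OF G F] F2] by (simp add: contr_simps)

lemma rtrancl_adj_subg_Min_comp:
  assumes G: "wf2 G" and F': "F' \<subseteq> edges G" and "F \<subseteq> F'" and v: "v \<in> V G"
  shows "(v, Min (comp (subg G F) v)) \<in> (adj (subg G F'))\<^sup>*"
    and "(Min (comp (subg G F) v), v) \<in> (adj (subg G F'))\<^sup>*"
proof -
  have K: "wf2 (subg G F)" using wf2_subg G F' assms(3) by blast
  have "(v, Min (comp (subg G F) v)) \<in> (adj (subg G F))\<^sup>*" using Min_comp(2)[OF K, of v] v by simp
  then have "(Min (comp (subg G F) v), v) \<in> (adj (subg G F))\<^sup>*" by (rule adj_rtrancl_sym[OF K])
  with \<open>(v, Min (comp (subg G F) v)) \<in> (adj (subg G F))\<^sup>*\<close>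
  show "(v, Min (comp (subg G F) v)) \<in> (adj (subg G F'))\<^sup>*"
    and "(Min (comp (subg G F) v), v) \<in> (adj (subg G F'))\<^sup>*"
    using rtrancl_mono[OF adj_subg_mono[OF G F' assms(3)]] by (simp_all add: subsetD)
qed

lemma adj_subg_contr_subset:
  assumes G: "wf2 G" and F: "F \<subseteq> edges G" and F2: "F2 \<subseteq> edges (contr G F)"
  shows "adj (subg (contr G F) F2) \<subseteq> (adj (subg G (F \<union> F2)))\<^sup>*"
proof
  let ?m = "\<lambda>v. Min (comp (subg G F) v)" and ?K2 = "subg G (F \<union> F2)"
  have FF: "F \<union> F2 \<subseteq> edges G" using F F2 edges_contr[OF G F] by blast
  fix p assume "p \<in> adj (subg (contr G F) F2)"
  then obtain h where h: "h \<in> \<Union>F2" "p = (?m (nu G h), ?m (nu G (iota G h)))"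
    unfolding adj_subg_contr[OF G F F2] by blast
  then have "h \<in> \<Union>(F \<union> F2)" by blast
  then have "h \<in> H G" by (rule Union_edgesD(1)[OF G FF])
  then have "nu G h \<in> V G" "nu G (iota G h) \<in> V G" using wf2D(4,5)[OF G] by simp_all
  have "(?m (nu G h), nu G h) \<in> (adj ?K2)\<^sup>*"
    by (rule rtrancl_adj_subg_Min_comp(2)[OF G FF Un_upper1 \<open>nu G h \<in> V G\<close>])
  also have "(nu G h, nu G (iota G h)) \<in> adj ?K2"
    using h(1) unfolding adj_subg[OF G FF] by blast
  also have "(nu G (iota G h), ?m (nu G (iota G h))) \<in> (adj ?K2)\<^sup>*"
    by (rule rtrancl_adj_subg_Min_comp(1)[OF G FF Un_upper1 \<open>nu G (iota G h) \<in> V G\<close>])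
  finally show "p \<in> (adj ?K2)\<^sup>*" using h(2) by simp
qed

lemma Min_comp_adj_subg_Un:
  assumes G: "wf2 G" and F: "F \<subseteq> edges G" and F2: "F2 \<subseteq> edges (contr G F)"
    and xy: "(x, y) \<in> adj (subg G (F \<union> F2))"
  defines "m \<equiv> \<lambda>v. Min (comp (subg G F) v)"
  shows "(m x, m y) \<in> (adj (subg (contr G F) F2))\<^sup>*"
proof -
  let ?K = "subg G F"
  have FF: "F \<union> F2 \<subseteq> edges G" using F F2 edges_contr[OF G F] by blast
  have K: "wf2 ?K" using wf2_subg[OF G F] .
  obtain h where h: "h \<in> \<Union>(F \<union> F2)" "x = nu G h" "y = nu G (iota G h)"
    using xy unfolding adj_subg[OF G FF] by blast
  show ?thesis
  proof (cases "h \<in> \<Union>F")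
    case True
    then have "(x, y) \<in> adj ?K" unfolding adj_subg[OF G F] using h(2,3) by blast
    then have "x \<in> V G" "y \<in> V G" "(x, y) \<in> (adj ?K)\<^sup>*" using adj_subset[OF K] by auto
    then have "m x = m y" using Min_comp_eq_iff[OF K, of x y] unfolding m_def by simp
    then show ?thesis by simp
  next
    case False
    then have "h \<in> \<Union>F2" using h(1) by blast
    then have "(m x, m y) \<in> adj (subg (contr G F) F2)"
      unfolding adj_subg_contr[OF G F F2] m_def h(2,3) by blast
    then show ?thesis by simp
  qed
qed

lemma contr_contr_adj_rtrancl_iff:
  assumes G: "wf2 G" and F: "F \<subseteq> edges G" and F2: "F2 \<subseteq> edges (contr G F)"
    and u: "u \<in> V G" and w: "w \<in> V G"
  defines "m \<equiv> \<lambda>v. Min (comp (subg G F) v)"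
  shows "(m u, m w) \<in> (adj (subg (contr G F) F2))\<^sup>* \<longleftrightarrow> (u, w) \<in> (adj (subg G (F \<union> F2)))\<^sup>*"
proof
  let ?K1 = "subg (contr G F) F2" and ?K2 = "subg G (F \<union> F2)"
  have FF: "F \<union> F2 \<subseteq> edges G" using F F2 edges_contr[OF G F] by blast
  assume uw: "(m u, m w) \<in> (adj ?K1)\<^sup>*"
  have "(u, m u) \<in> (adj ?K2)\<^sup>*"
    unfolding m_def by (rule rtrancl_adj_subg_Min_comp(1)[OF G FF Un_upper1 u])
  also have "(m u, m w) \<in> (adj ?K2)\<^sup>*"
    using uw rtrancl_subset_rtrancl[OF adj_subg_contr_subset[OF G F F2]] by blast
  also have "(m w, w) \<in> (adj ?K2)\<^sup>*"
    unfolding m_def by (rule rtrancl_adj_subg_Min_comp(2)[OF G FF Un_upper1 w])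
  finally show "(u, w) \<in> (adj ?K2)\<^sup>*" .
next
  show "(u, w) \<in> (adj (subg G (F \<union> F2)))\<^sup>* \<Longrightarrow> (m u, m w) \<in> (adj (subg (contr G F) F2))\<^sup>*"
    unfolding m_def by (rule rtrancl_map[OF Min_comp_adj_subg_Un[OF G F F2]])
qed

lemma strand_step_subg_mono:
  assumes "\<Union>F \<subseteq> \<Union>F'"
  shows "strand_step (subg G F) \<subseteq> (strand_step (subg G F'))\<^sup>*"
proof
  fix p assume "p \<in> strand_step (subg G F)"
  then obtain a where a: "a \<in> S G" and "p = (a, sig1 G a) \<or> p = (a, sig2 (subg G F) a)"
    unfolding strand_step_def by (auto simp del: subg_simps(8))
  moreover have "mu G a \<in> \<Union>F \<Longrightarrow> mu G a \<in> \<Union>F'" using assms by blast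
  then have "sig2 (subg G F) a = sig2 (subg G F') a \<or> sig2 (subg G F) a = a"
    by (simp del: Union_iff)
  ultimately consider "p = (a, sig1 (subg G F') a)" | "p = (a, sig2 (subg G F') a)" | "p = (a, a)"
    by fastforce
  then show "p \<in> (strand_step (subg G F'))\<^sup>*"
    using a unfolding strand_step_def by cases auto
qed

lemma S_contr_contr:
  assumes G: "wf2 G" and F: "F \<subseteq> edges G" and F2: "F2 \<subseteq> edges (contr G F)"
  shows "S (contr (contr G F) F2) = S (contr G (F \<union> F2))"
proof -
  have FF: "F \<union> F2 \<subseteq> edges G" using F F2 edges_contr[OF G F] by blast
  show ?thesis
    unfolding S_contr[OF G FF] S_contr[OF wf2_contr[OF G F] F2] S_contr[OF G F]
    by (auto simp: contr_simps)
qed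

lemma strand_step_subg_contr:
  assumes G: "wf2 G" and F: "F \<subseteq> edges G"
  shows "strand_step (subg (contr G F) F2) \<subseteq> (strand_step (subg G (F \<union> F2)))\<^sup>*"
proof
  let ?K = "subg G F" and ?K1 = "subg (contr G F) F2" and ?K2 = "subg G (F \<union> F2)"
  fix p assume "p \<in> strand_step ?K1"
  then obtain x where x: "x \<in> S (contr G F)" and "p = (x, sig1 ?K1 x) \<or> p = (x, sig2 ?K1 x)"
    unfolding strand_step_def by (simp only: subg_simps(3)) blast
  moreover have "sig1 ?K1 x = face_end ?K x" "sig2 ?K1 x = (if mu G x \<in> \<Union>F2 then sig2 G x else x)"
    by (simp_all add: contr_simps del: Union_iff)
  ultimately consider "p = (x, face_end ?K x)" | "p = (x, x)" | "mu G x \<in> \<Union>F2" "p = (x, sig2 G x)"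
    by metis
  then show "p \<in> (strand_step ?K2)\<^sup>*"
  proof cases
    case 1
    have "x \<in> S ?K" "sig2 ?K x = x" using x by (simp_all add: contr_simps)
    then have "p \<in> (strand_step ?K)\<^sup>*"
      using face_partner_face_end[OF wf2_subg[OF G F]] 1 unfolding face_partner_def by blast
    then show ?thesis
      using rtrancl_subset_rtrancl[OF strand_step_subg_mono[of F "F \<union> F2" G]] by blast
  next
    case 3
    then have "(x, sig2 G x) \<in> strand_step ?K2"
      using x S_contr[OF G F] unfolding strand_step_def by (auto simp del: Union_iff)
    then show ?thesis using 3 by simp
  qed simp
qed

lemma face_end_contr_contr:
  assumes G: "wf2 G" and F: "F \<subseteq> edges G" and F2: "F2 \<subseteq> edges (contr G F)"
    and s: "s \<in> S (contr G (F \<union> F2))"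
  shows "face_end (subg G (F \<union> F2)) s = face_end (subg (contr G F) F2) s"
proof -
  let ?K1 = "subg (contr G F) F2" and ?K2 = "subg G (F \<union> F2)"
  have FF: "F \<union> F2 \<subseteq> edges G" using F F2 edges_contr[OF G F] by blast
  have K1: "wf2 ?K1" and K2: "wf2 ?K2" using wf2_contr wf2_subg G F F2 FF by blast+
  have "s \<in> S (contr (contr G F) F2)" using s S_contr_contr[OF G F F2] by simp
  then have sK1: "s \<in> S ?K1" "sig2 ?K1 s = s"
    by (simp_all only: contr_simps(3)[of "contr G F"] subg_simps(3) mem_Collect_eq)
  have sK2: "s \<in> S ?K2" "sig2 ?K2 s = s"
    using s by (simp_all only: contr_simps(3)[of G] subg_simps(3) mem_Collect_eq)
  let ?t = "face_end ?K1 s"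
  have t: "?t \<in> S ?K1" "?t \<noteq> s" "sig2 ?K1 ?t = ?t" "(s, ?t) \<in> (strand_step ?K1)\<^sup>*"
    using face_partner_face_end[OF K1 sK1] unfolding face_partner_def by simp_all
  then have "?t \<in> S (contr G (F \<union> F2))"
    unfolding S_contr_contr[OF G F F2, symmetric] contr_simps(3)[of "contr G F"] by simp
  then have "?t \<in> S ?K2" "sig2 ?K2 ?t = ?t"
    by (simp_all only: contr_simps(3)[of G] subg_simps(3) mem_Collect_eq)
  moreover have "(s, ?t) \<in> (strand_step ?K2)\<^sup>*"
    using t(4) rtrancl_subset_rtrancl[OF strand_step_subg_contr[OF G F]] by blast
  ultimately have "face_partner ?K2 s ?t" unfolding face_partner_def using t(2) by blast
  then show ?thesis using face_end_iff[OF K2 sK2] by blast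
qed

lemma contr_contr_iso:
  assumes G: "wf2 G" and F: "F \<subseteq> edges G" and F2: "F2 \<subseteq> edges (contr G F)"
  shows "iso2 (contr G (F \<union> F2)) (contr (contr G F) F2)"
proof -
  let ?G1 = "contr G F" and ?K1 = "subg (contr G F) F2"
  let ?m = "\<lambda>v. Min (comp (subg G F) v)"
  have FF: "F \<union> F2 \<subseteq> edges G" using F F2 edges_contr[OF G F] by blast
  have G1: "wf2 ?G1" and K1: "wf2 ?K1" using wf2_contr wf2_subg G F F2 by blast+
  have H_eq: "H (contr G (F \<union> F2)) = H (contr ?G1 F2)"
    unfolding H_contr[OF G FF] H_contr[OF G1 F2] H_contr[OF G F] by auto
  note S_eq = S_contr_contr[OF G F F2, symmetric]
  show ?thesis
  proof (rule iso2_contrI[OF G FF, where fH = id and fS = id and \<psi> = "\<lambda>u. Min (comp ?K1 (?m u))"])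
    show "bij_betw id (H (contr G (F \<union> F2))) (H (contr ?G1 F2))"
      "bij_betw id (S (contr G (F \<union> F2))) (S (contr ?G1 F2))"
      unfolding H_eq S_eq by simp_all
    show "(\<lambda>u. Min (comp ?K1 (?m u))) ` V G = V (contr ?G1 F2)"
      unfolding V_contr[of ?G1] V_contr[of G] image_image by simp
    fix u w assume "u \<in> V G" "w \<in> V G"
    moreover from this have "?m u \<in> V ?G1" "?m w \<in> V ?G1" unfolding V_contr by simp_all
    ultimately show "Min (comp ?K1 (?m u)) = Min (comp ?K1 (?m w)) \<longleftrightarrow> (u, w) \<in> (adj (subg G (F \<union> F2)))\<^sup>*"
      using Min_comp_eq_iff[OF K1] contr_contr_adj_rtrancl_iff[OF G F F2] by simp
  next
    fix s assume "s \<in> S (contr G (F \<union> F2))"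
    then show "id (face_end (subg G (F \<union> F2)) s) = sig1 (contr ?G1 F2) (id s)"
      using face_end_contr_contr[OF G F F2] by (simp add: contr_simps)
  qed (simp_all add: contr_simps)
qed

lemma vgraph_simps [simp]:
  "V1 (vgraph G v) = {h \<in> H G. nu G h = v}" "H1 (vgraph G v) = {s \<in> S G. nu G (mu G s) = v}"
  "nu1 (vgraph G v) = mu G" "iota1 (vgraph G v) = sig1 G"
  unfolding vgraph_def by simp_all

lemma wf1_vgraph: "wf2 G \<Longrightarrow> wf1 (vgraph G v)"
  unfolding wf1_def by (auto dest: wf2D)

lemma vgraph_subg [simp]: "vgraph (subg G F) v = vgraph G v"
  unfolding vgraph_def by simp

lemma iso2_by_vgraph:
  assumes m: "iso2_by A B fV fH fS" and A: "wf2 A" and v: "v \<in> V A"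
  shows "iso1 (vgraph A v) (vgraph B (fV v))"
proof -
  note M = iso2_byD[OF m] and W = wf2D[OF A]
  have nu_iff: "nu B (fH h) = fV v \<longleftrightarrow> nu A h = v" if "h \<in> H A" for h
    using M(1,4) W(4) v that by (metis bij_betw_iff_bijections)
  show ?thesis
    unfolding iso1_def vgraph_simps
  proof (intro exI conjI ballI)
    show "bij_betw fH {h \<in> H A. nu A h = v} {h \<in> H B. nu B h = fV v}"
      using M(2) nu_iff by (rule bij_betw_restrict_iff)
    show "bij_betw fS {s \<in> S A. nu A (mu A s) = v} {s \<in> S B. nu B (mu B s) = fV v}"
      using M(3) by (rule bij_betw_restrict_iff) (metis nu_iff W(7) M(6))
  qed (use M in auto)
qed

definition vgraphs_in :: "graph1 set set \<Rightarrow> graph2 \<Rightarrow> bool" where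
  "vgraphs_in VV G \<longleftrightarrow> (\<forall>v\<in>V G. ucls1 (vgraph G v) \<in> VV)"

lemma vgraphs_in_iso2:
  assumes i: "iso2 A B" and A: "wf2 A" and in_A: "vgraphs_in VV A"
  shows "vgraphs_in VV B"
  unfolding vgraphs_in_def
proof
  obtain fV fH fS where m: "iso2_by A B fV fH fS" using i iso2_iff_iso2_by by blast
  fix v' assume "v' \<in> V B"
  then obtain v where "v \<in> V A" "v' = fV v"
    using iso2_byD(1)[OF m] by (auto simp: bij_betw_def)
  then show "ucls1 (vgraph B v') \<in> VV"
    using ucls1_eq[OF wf1_vgraph[OF A] iso2_by_vgraph[OF m A]] in_A unfolding vgraphs_in_def by simp
qed

lemma vgraphs_in_subg [simp]: "vgraphs_in VV (subg G F) = vgraphs_in VV G"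
  unfolding vgraphs_in_def by simp

lemma G2_iff:
  assumes G: "wf2 G"
  shows "ucls G \<in> G2 VV \<longleftrightarrow> vgraphs_in VV G"
proof
  assume "ucls G \<in> G2 VV"
  then obtain G0 where "ucls G = ucls G0" "wf2 G0" "vgraphs_in VV G0"
    unfolding G2_def vgraphs_in_def by blast
  then show "vgraphs_in VV G" using ucls_eq_iff[OF _ G] vgraphs_in_iso2 by metis
qed (use G in \<open>auto simp: G2_def vgraphs_in_def\<close>)

lemma cclosure_iff:
  "x \<in> cclosure VV \<longleftrightarrow> (\<exists>G F. wf2 G \<and> vgraphs_in VV G \<and> F \<subseteq> edges G \<and> x = ucls (contr G F))"
proof -
  have "wf2 G \<and> ucls G \<in> G2 VV \<longleftrightarrow> wf2 G \<and> vgraphs_in VV G" for G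
    using G2_iff by blast
  then show ?thesis unfolding cclosure_def by blast
qed

section \<open>Disjoint union\<close>

lemma mix_simps [simp]:
  "mix f g (2 * n) = 2 * f n" "mix f g (Suc (2 * n)) = Suc (2 * g n)"
  unfolding mix_def by simp_all

lemma dlab_iff [simp]:
  "2 * n \<in> dlab A B \<longleftrightarrow> n \<in> A" "Suc (2 * n) \<in> dlab A B \<longleftrightarrow> n \<in> B"
  unfolding dlab_def by (auto; presburger)+

lemma dlab_cases [consumes 1, case_names left right]:
  assumes "x \<in> dlab A B"
  obtains n where "n \<in> A" "x = 2 * n" | n where "n \<in> B" "x = Suc (2 * n)"
  using assms unfolding dlab_def by auto

lemma nat_double_cases [case_names even odd]:
  obtains n where "x = 2 * n" | n where "x = Suc (2 * n)"
  by (metis evenE oddE Suc_eq_plus1)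

lemma finite_dlab: "finite A \<Longrightarrow> finite B \<Longrightarrow> finite (dlab A B)"
  unfolding dlab_def by simp

lemma du_simps [simp]:
  "V (du A B) = dlab (V A) (V B)" "H (du A B) = dlab (H A) (H B)" "S (du A B) = dlab (S A) (S B)"
  "nu (du A B) = mix (nu A) (nu B)" "iota (du A B) = mix (iota A) (iota B)"
  "mu (du A B) = mix (mu A) (mu B)" "sig1 (du A B) = mix (sig1 A) (sig1 B)"
  "sig2 (du A B) = mix (sig2 A) (sig2 B)"
  unfolding du_def by simp_all

lemma wf2_du:
  assumes A: "wf2 A" and B: "wf2 B"
  shows "wf2 (du A B)"
proof (rule wf2I)
  note WA = wf2D[OF A] and WB = wf2D[OF B]
  show "finite (V (du A B))" "finite (H (du A B))" "finite (S (du A B))"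
    using WA WB by (simp_all add: finite_dlab)
  fix h assume "h \<in> H (du A B)"
  then show "nu (du A B) h \<in> V (du A B)" "iota (du A B) h \<in> H (du A B)"
    "iota (du A B) (iota (du A B) h) = h"
    by (auto elim: dlab_cases simp: WA WB)
next
  note WA = wf2D[OF A] and WB = wf2D[OF B]
  fix s assume "s \<in> S (du A B)"
  then show "mu (du A B) s \<in> H (du A B)" "sig1 (du A B) s \<in> S (du A B)"
    "sig1 (du A B) (sig1 (du A B) s) = s" "sig1 (du A B) s \<noteq> s"
    "nu (du A B) (mu (du A B) (sig1 (du A B) s)) = nu (du A B) (mu (du A B) s)"
    "sig2 (du A B) s \<in> S (du A B)" "sig2 (du A B) (sig2 (du A B) s) = s"
    "iota (du A B) (mu (du A B) s) = mu (du A B) (sig2 (du A B) s)"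
    "sig2 (du A B) s = s \<longleftrightarrow> iota (du A B) (mu (du A B) s) = mu (du A B) s"
    by (auto elim: dlab_cases simp: WA WB)
qed

lemma image_mix_dlab: "mix f g ` dlab A B = dlab (f ` A) (g ` B)"
  unfolding dlab_def image_Un by (simp add: image_image)

lemma bij_betw_mix:
  assumes f: "bij_betw f A A'" and g: "bij_betw g B B'"
  shows "bij_betw (mix f g) (dlab A B) (dlab A' B')"
proof -
  have "mix f g ` dlab A B = dlab A' B'"
    using f g image_mix_dlab by (simp add: bij_betw_def)
  moreover have "inj_on (mix f g) (dlab A B)"
  proof (rule inj_onI)
    fix x y assume "x \<in> dlab A B" "y \<in> dlab A B" "mix f g x = mix f g y"
    then show "x = y"
      using f g unfolding bij_betw_def
      by (elim dlab_cases) (auto dest: inj_onD, presburger+)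
  qed
  ultimately show ?thesis unfolding bij_betw_def by blast
qed

lemma iso2_by_du:
  assumes "iso2_by A A' fV fH fS" and "iso2_by B B' gV gH gS"
  shows "iso2_by (du A B) (du A' B') (mix fV gV) (mix fH gH) (mix fS gS)"
proof -
  note M1 = iso2_byD[OF assms(1)] and M2 = iso2_byD[OF assms(2)]
  show ?thesis
    unfolding iso2_by_def
  proof (intro conjI ballI)
    show "bij_betw (mix fV gV) (V (du A B)) (V (du A' B'))"
      "bij_betw (mix fH gH) (H (du A B)) (H (du A' B'))"
      "bij_betw (mix fS gS) (S (du A B)) (S (du A' B'))"
      using bij_betw_mix M1(1-3) M2(1-3) by simp_all
  next
    fix h assume "h \<in> H (du A B)"
    then have "h \<in> dlab (H A) (H B)" by simp
    then have "mix fV gV (nu (du A B) h) = nu (du A' B') (mix fH gH h)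
      \<and> mix fH gH (iota (du A B) h) = iota (du A' B') (mix fH gH h)"
      by (elim dlab_cases) (simp_all add: M1(4,5) M2(4,5))
    then show "mix fV gV (nu (du A B) h) = nu (du A' B') (mix fH gH h)"
      "mix fH gH (iota (du A B) h) = iota (du A' B') (mix fH gH h)" by blast+
  next
    fix s assume "s \<in> S (du A B)"
    then have "s \<in> dlab (S A) (S B)" by simp
    then have "mix fH gH (mu (du A B) s) = mu (du A' B') (mix fS gS s)
      \<and> mix fS gS (sig1 (du A B) s) = sig1 (du A' B') (mix fS gS s)
      \<and> mix fS gS (sig2 (du A B) s) = sig2 (du A' B') (mix fS gS s)"
      by (elim dlab_cases) (simp_all add: M1(6-8) M2(6-8))
    then show "mix fH gH (mu (du A B) s) = mu (du A' B') (mix fS gS s)"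
      "mix fS gS (sig1 (du A B) s) = sig1 (du A' B') (mix fS gS s)"
      "mix fS gS (sig2 (du A B) s) = sig2 (du A' B') (mix fS gS s)" by blast+
  qed
qed

lemma iso2_du: "iso2 A A' \<Longrightarrow> iso2 B B' \<Longrightarrow> iso2 (du A B) (du A' B')"
  unfolding iso2_iff_iso2_by using iso2_by_du by blast

lemma vgraph_du_left:
  "iso1 (vgraph A v) (vgraph (du A B) (2 * v))"
proof -
  have "{h \<in> dlab (H A) (H B). mix (nu A) (nu B) h = 2 * v} = (*) 2 ` {h \<in> H A. nu A h = v}"
    "{s \<in> dlab (S A) (S B). mix (nu A) (nu B) (mix (mu A) (mu B) s) = 2 * v}
       = (*) 2 ` {s \<in> S A. nu A (mu A s) = v}"
    by (auto elim!: dlab_cases) presburger+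
  then show ?thesis
    unfolding iso1_def vgraph_simps du_simps
    by (intro exI[of _ "(*) 2"]) (auto simp: bij_betw_def inj_on_def)
qed

lemma vgraph_du_right:
  "iso1 (vgraph B v) (vgraph (du A B) (Suc (2 * v)))"
proof -
  have "{h \<in> dlab (H A) (H B). mix (nu A) (nu B) h = Suc (2 * v)} = (\<lambda>n. Suc (2 * n)) ` {h \<in> H B. nu B h = v}"
    "{s \<in> dlab (S A) (S B). mix (nu A) (nu B) (mix (mu A) (mu B) s) = Suc (2 * v)}
       = (\<lambda>n. Suc (2 * n)) ` {s \<in> S B. nu B (mu B s) = v}"
    by (auto elim!: dlab_cases) presburger+
  then show ?thesis
    unfolding iso1_def vgraph_simps du_simps
    by (intro exI[of _ "\<lambda>n. Suc (2 * n)"]) (auto simp: bij_betw_def inj_on_def)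
qed

lemma vgraphs_in_du:
  assumes "wf2 A" "wf2 B" "vgraphs_in VV A" "vgraphs_in VV B"
  shows "vgraphs_in VV (du A B)"
  using assms ucls1_eq[OF wf1_vgraph vgraph_du_left] ucls1_eq[OF wf1_vgraph vgraph_du_right]
  unfolding vgraphs_in_def by (auto elim!: dlab_cases)

definition du_edges :: "nat set set \<Rightarrow> nat set set \<Rightarrow> nat set set" where
  "du_edges FA FB = image ((*) 2) ` FA \<union> image (\<lambda>n. Suc (2 * n)) ` FB"

lemma Union_du_edges_iff [simp]:
  "2 * n \<in> \<Union>(du_edges FA FB) \<longleftrightarrow> n \<in> \<Union>FA"
  "Suc (2 * n) \<in> \<Union>(du_edges FA FB) \<longleftrightarrow> n \<in> \<Union>FB"
  unfolding du_edges_def by (auto; presburger)+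

lemma du_edges_subset:
  assumes "FA \<subseteq> edges A" "FB \<subseteq> edges B"
  shows "du_edges FA FB \<subseteq> edges (du A B)"
proof -
  have "image ((*) 2) ` edges A \<subseteq> edges (du A B)"
  proof
    fix e assume "e \<in> image ((*) 2) ` edges A"
    then obtain h where "h \<in> H A" "iota A h \<noteq> h" "e = {2 * h, 2 * iota A h}"
      unfolding edges_def by auto
    then show "e \<in> edges (du A B)" unfolding edges_def by (intro CollectI exI[of _ "2 * h"]) simp
  qed
  moreover have "image (\<lambda>n. Suc (2 * n)) ` edges B \<subseteq> edges (du A B)"
  proof
    fix e assume "e \<in> image (\<lambda>n. Suc (2 * n)) ` edges B"
    then obtain h where "h \<in> H B" "iota B h \<noteq> h" "e = {Suc (2 * h), Suc (2 * iota B h)}"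
      unfolding edges_def by auto
    then show "e \<in> edges (du A B)" unfolding edges_def by (intro CollectI exI[of _ "Suc (2 * h)"]) simp
  qed
  ultimately show ?thesis
    using image_mono[OF assms(1), of "image ((*) 2)"] image_mono[OF assms(2), of "image (\<lambda>n. Suc (2 * n))"]
    unfolding du_edges_def by (meson Un_least order_trans)
qed

lemma subg_du: "subg (du A B) (du_edges FA FB) = du (subg A FA) (subg B FB)"
proof -
  have "iota (subg (du A B) (du_edges FA FB)) h = iota (du (subg A FA) (subg B FB)) h" for h
    by (cases h rule: nat_double_cases) (simp_all del: Union_iff)
  moreover have "sig2 (subg (du A B) (du_edges FA FB)) s = sig2 (du (subg A FA) (subg B FB)) s" for s
    by (cases s rule: nat_double_cases) (simp_all del: Union_iff)
  moreover have "graph2.more (subg (du A B) (du_edges FA FB)) = graph2.more (du (subg A FA) (subg B FB))"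
    by (simp add: subg_def du_def)
  ultimately show ?thesis
    by (intro graph2.equality ext) (simp_all del: subg_simps(7,8))
qed

lemma rtrancl_Un_map_prod_imageD:
  assumes f: "inj f" and disj: "range f \<inter> range g = {}"
    and r: "(f x, z) \<in> (map_prod f f ` R \<union> map_prod g g ` Q)\<^sup>*"
  shows "\<exists>y. z = f y \<and> (x, y) \<in> R\<^sup>*"
  using r
proof (induction rule: rtrancl_induct)
  case (step y' z')
  then obtain y where y: "y' = f y" "(x, y) \<in> R\<^sup>*" by blast
  from step.hyps(2) show ?case
  proof
    assume "(y', z') \<in> map_prod f f ` R"
    then obtain a b where "(a, b) \<in> R" "y' = f a" "z' = f b" by auto
    then show ?case using y f by (metis injD rtrancl_into_rtrancl)
  next
    assume "(y', z') \<in> map_prod g g ` Q"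
    then show ?case using y disj by auto
  qed
qed blast

lemma adj_du:
  "adj (du A B) = map_prod ((*) 2) ((*) 2) ` adj A \<union> map_prod (\<lambda>n. Suc (2 * n)) (\<lambda>n. Suc (2 * n)) ` adj B"
proof -
  have "adj (du A B) = {(nu (du A B) h, nu (du A B) (iota (du A B) h)) | h.
      h \<in> (*) 2 ` H A \<union> (\<lambda>n. Suc (2 * n)) ` H B \<and> iota (du A B) h \<noteq> h}"
    unfolding adj_def by (simp add: dlab_def)
  also have "\<dots> = map_prod ((*) 2) ((*) 2) ` adj A \<union> map_prod (\<lambda>n. Suc (2 * n)) (\<lambda>n. Suc (2 * n)) ` adj B"
    unfolding adj_def
    by (auto simp: image_iff, (rule_tac x = "2 * h" in exI, simp), (rule_tac x = "Suc (2 * h)" in exI, simp))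
  finally show ?thesis .
qed

lemma du_adj_rtrancl:
  "(2 * a, z) \<in> (adj (du A B))\<^sup>* \<longleftrightarrow> (\<exists>b. z = 2 * b \<and> (a, b) \<in> (adj A)\<^sup>*)"
  "(Suc (2 * a), z) \<in> (adj (du A B))\<^sup>* \<longleftrightarrow> (\<exists>b. z = Suc (2 * b) \<and> (a, b) \<in> (adj B)\<^sup>*)"
proof -
  let ?e0 = "(*) (2::nat)" and ?e1 = "\<lambda>n::nat. Suc (2 * n)"
  have inj: "inj ?e0" "inj ?e1" by (auto intro: injI)
  have disj: "range ?e0 \<inter> range ?e1 = {}" "range ?e1 \<inter> range ?e0 = {}"
    by (auto, presburger+)
  have fwd: "(?e0 a, ?e0 b) \<in> (adj (du A B))\<^sup>*" if "(a, b) \<in> (adj A)\<^sup>*" for a b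
    using rtrancl_map_prod_image[OF that, of ?e0] rtrancl_mono[of _ "adj (du A B)"] adj_du by blast
  have fwd': "(?e1 a, ?e1 b) \<in> (adj (du A B))\<^sup>*" if "(a, b) \<in> (adj B)\<^sup>*" for a b
    using rtrancl_map_prod_image[OF that, of ?e1] rtrancl_mono[of _ "adj (du A B)"] adj_du by blast
  show "(2 * a, z) \<in> (adj (du A B))\<^sup>* \<longleftrightarrow> (\<exists>b. z = 2 * b \<and> (a, b) \<in> (adj A)\<^sup>*)"
    using rtrancl_Un_map_prod_imageD[OF inj(1) disj(1), of a z "adj A" "adj B"] fwd
    unfolding adj_du by blast
  show "(Suc (2 * a), z) \<in> (adj (du A B))\<^sup>* \<longleftrightarrow> (\<exists>b. z = Suc (2 * b) \<and> (a, b) \<in> (adj B)\<^sup>*)"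
    using rtrancl_Un_map_prod_imageD[OF inj(2) disj(2), of a z "adj B" "adj A"] fwd'
    unfolding adj_du by (auto simp: Un_commute)
qed

lemma strand_embedding_du:
  "strand_embedding A (du A B) ((*) 2)" "strand_embedding B (du A B) (\<lambda>n. Suc (2 * n))"
  unfolding strand_embedding_def by (auto simp: inj_on_def)

lemma contr_du_iso:
  assumes A: "wf2 A" and B: "wf2 B" and FA: "FA \<subseteq> edges A" and FB: "FB \<subseteq> edges B"
  shows "iso2 (contr (du A B) (du_edges FA FB)) (du (contr A FA) (contr B FB))"
proof -
  let ?D = "du A B" and ?E = "du_edges FA FB" and ?KA = "subg A FA" and ?KB = "subg B FB"
  let ?C = "du (contr A FA) (contr B FB)"
  let ?\<psi> = "mix (\<lambda>u. Min (comp ?KA u)) (\<lambda>u. Min (comp ?KB u))"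
  have D: "wf2 ?D" and KA: "wf2 ?KA" and KB: "wf2 ?KB" and KD: "wf2 (du ?KA ?KB)"
    using wf2_du wf2_subg A B FA FB by blast+
  have E: "?E \<subseteq> edges ?D" using du_edges_subset[OF FA FB] .
  have subg_D: "subg ?D ?E = du ?KA ?KB" by (rule subg_du)
  have "x \<in> H (contr ?D ?E) \<longleftrightarrow> x \<in> H ?C" for x
    by (cases x rule: nat_double_cases) (simp_all add: contr_simps(2) subg_D del: subg_simps(7))
  moreover have "x \<in> S (contr ?D ?E) \<longleftrightarrow> x \<in> S ?C" for x
    by (cases x rule: nat_double_cases) (simp_all add: contr_simps(3) subg_D del: subg_simps(8))
  ultimately have H_eq: "H (contr ?D ?E) = H ?C" and S_eq: "S (contr ?D ?E) = S ?C" by blast+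
  show ?thesis
  proof (rule iso2_contrI[OF D E, where fH = id and fS = id and \<psi> = ?\<psi>])
    show "bij_betw id (H (contr ?D ?E)) (H ?C)" "bij_betw id (S (contr ?D ?E)) (S ?C)"
      unfolding H_eq S_eq by simp_all
    show "?\<psi> ` V ?D = V ?C"
      unfolding du_simps image_mix_dlab V_contr by simp
    fix u w assume "u \<in> V ?D" "w \<in> V ?D"
    then show "?\<psi> u = ?\<psi> w \<longleftrightarrow> (u, w) \<in> (adj (subg ?D ?E))\<^sup>*"
      unfolding subg_D du_simps
      by (elim dlab_cases) (auto simp: du_adj_rtrancl Min_comp_eq_iff[OF KA] Min_comp_eq_iff[OF KB], presburger+)
  next
    fix s assume "s \<in> S (contr ?D ?E)"
    then have "s \<in> dlab (S (contr A FA)) (S (contr B FB))" unfolding S_eq by simp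
    then show "id (face_end (subg ?D ?E) s) = sig1 ?C (id s)"
      unfolding subg_D
      by (elim dlab_cases) (simp_all add: contr_simps strand_embedding_face_end[OF strand_embedding_du(1) KA KD]
          strand_embedding_face_end[OF strand_embedding_du(2) KB KD])
  qed (auto elim!: dlab_cases simp: H_eq S_eq contr_simps)
qed

lemma rep_ucls:
  assumes G: "wf2 G"
  shows "wf2 (rep (ucls G))" "iso2 G (rep (ucls G))"
proof -
  have "rep (ucls G) \<in> ucls G"
    unfolding rep_def using G iso2_refl by (intro someI[of "\<lambda>x. x \<in> ucls G" G]) (simp add: ucls_def)
  then show "wf2 (rep (ucls G))" "iso2 G (rep (ucls G))" unfolding ucls_def by auto
qed

lemma cclosure_rep:
  assumes "x \<in> cclosure VV"
  obtains G F where "wf2 G" "vgraphs_in VV G" "F \<subseteq> edges G"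
    "wf2 (rep x)" "iso2 (rep x) (contr G F)"
proof -
  obtain G F where GF: "wf2 G" "vgraphs_in VV G" "F \<subseteq> edges G" "x = ucls (contr G F)"
    using assms unfolding cclosure_iff by blast
  have C: "wf2 (contr G F)" using wf2_contr GF(1,3) .
  have "wf2 (rep x)" "iso2 (contr G F) (rep x)" using rep_ucls[OF C] GF(4) by simp_all
  then show ?thesis using that[OF GF(1-3)] iso2_sym[OF _ C] by blast
qed

lemma cclosure_subset_UG2: "cclosure VV \<subseteq> UG2"
proof
  fix x assume "x \<in> cclosure VV"
  then obtain G F where "wf2 G" "F \<subseteq> edges G" "x = ucls (contr G F)"
    unfolding cclosure_iff by blast
  then show "x \<in> UG2" unfolding UG2_def using wf2_contr by blast
qed

lemma wf2_empty2: "wf2 empty2"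
  unfolding wf2_def empty2_def by simp

lemma empty2_in_cclosure: "ucls empty2 \<in> cclosure VV"
proof -
  have empty: "V empty2 = {}" "H empty2 = {}" "S empty2 = {}" "edges empty2 = {}"
    by (simp_all add: edges_def empty2_def)
  moreover have "V (contr empty2 {}) = {}" "H (contr empty2 {}) = {}" "S (contr empty2 {}) = {}"
    by (simp_all add: contr_simps comps_def empty)
  ultimately have "iso2 empty2 (contr empty2 {})"
    unfolding iso2_def by (intro exI[of _ id]) simp
  then have "ucls empty2 = ucls (contr empty2 {})"
    using ucls_eq_iff[OF wf2_empty2 wf2_contr[OF wf2_empty2]] empty(4) by simp
  moreover have "vgraphs_in VV empty2" unfolding vgraphs_in_def empty(1) by simp
  ultimately show ?thesis
    unfolding cclosure_iff using wf2_empty2 by blast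
qed

lemma du_in_cclosure:
  assumes x: "x \<in> cclosure VV" and y: "y \<in> cclosure VV"
  shows "ucls (du (rep x) (rep y)) \<in> cclosure VV"
proof -
  obtain A FA where A: "wf2 A" "vgraphs_in VV A" "FA \<subseteq> edges A" "wf2 (rep x)" "iso2 (rep x) (contr A FA)"
    by (rule cclosure_rep[OF x])
  obtain B FB where B: "wf2 B" "vgraphs_in VV B" "FB \<subseteq> edges B" "wf2 (rep y)" "iso2 (rep y) (contr B FB)"
    by (rule cclosure_rep[OF y])
  have D: "wf2 (du A B)" and E: "du_edges FA FB \<subseteq> edges (du A B)" and
    C: "wf2 (contr (du A B) (du_edges FA FB))"
    using wf2_du[OF A(1) B(1)] du_edges_subset[OF A(3) B(3)] wf2_contr by blast+
  have "iso2 (du (rep x) (rep y)) (contr (du A B) (du_edges FA FB))"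
    using iso2_trans[OF iso2_du[OF A(5) B(5)] iso2_sym[OF contr_du_iso[OF A(1) B(1) A(3) B(3)] C]] .
  then have "ucls (du (rep x) (rep y)) = ucls (contr (du A B) (du_edges FA FB))"
    using ucls_eq_iff[OF wf2_du[OF A(4) B(4)] C] by blast
  then show ?thesis
    unfolding cclosure_iff using D E vgraphs_in_du[OF A(1) B(1) A(2) B(2)] by blast
qed

lemma subg_contr_in_cclosure:
  assumes x: "x \<in> cclosure VV" and F': "F' \<subseteq> edges (rep x)"
  shows "ucls (subg (rep x) F') \<in> cclosure VV" "ucls (contr (rep x) F') \<in> cclosure VV"
proof -
  obtain G F where G: "wf2 G" "vgraphs_in VV G" "F \<subseteq> edges G" and
    R: "wf2 (rep x)" "iso2 (rep x) (contr G F)"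
    by (rule cclosure_rep[OF x])
  have C: "wf2 (contr G F)" using wf2_contr[OF G(1,3)] .
  obtain F2 where F2: "F2 \<subseteq> edges (contr G F)" "iso2 (subg (rep x) F') (subg (contr G F) F2)"
    "iso2 (contr (rep x) F') (contr (contr G F) F2)"
    using iso2_subg_contr[OF R(2,1) C F'] by blast
  have FF: "F \<union> F2 \<subseteq> edges G" using G(3) F2(1) edges_contr[OF G(1,3)] by blast
  then have F_sub: "F \<subseteq> edges (subg G (F \<union> F2))" using edges_subg[OF G(1) FF] by simp
  have GFF: "wf2 (subg G (F \<union> F2))" using wf2_subg[OF G(1) FF] .
  have C1: "wf2 (contr (subg G (F \<union> F2)) F)" and C2: "wf2 (contr G (F \<union> F2))"
    using wf2_contr[OF GFF F_sub] wf2_contr[OF G(1) FF] .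
  have "iso2 (subg (rep x) F') (contr (subg G (F \<union> F2)) F)"
    using iso2_trans[OF F2(2) iso2_sym[OF contr_subg_iso[OF G(1,3) F2(1)] C1]] .
  then have "ucls (subg (rep x) F') = ucls (contr (subg G (F \<union> F2)) F)"
    using ucls_eq_iff[OF wf2_subg[OF R(1) F'] C1] by blast
  then show "ucls (subg (rep x) F') \<in> cclosure VV"
    unfolding cclosure_iff using GFF G(2) F_sub vgraphs_in_subg by blast
  have "iso2 (contr (rep x) F') (contr G (F \<union> F2))"
    using iso2_trans[OF F2(3) iso2_sym[OF contr_contr_iso[OF G(1,3) F2(1)] C2]] .
  then have "ucls (contr (rep x) F') = ucls (contr G (F \<union> F2))"
    using ucls_eq_iff[OF wf2_contr[OF R(1) F'] C2] by blast
  then show "ucls (contr (rep x) F') \<in> cclosure VV"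
    unfolding cclosure_iff using G(1,2) FF by blast
qed

section \<open>The generated subbialgebra\<close>

definition supported_on :: "graph2 set set \<Rightarrow> elt set" where
  "supported_on X = {a. finite (supp a) \<and> supp a \<subseteq> X}"

lemma supp_gbasis: "supp (gbasis x) = {x}"
  unfolding supp_def gbasis_def by auto

lemma supp_gmult: "supp (gmult a b) \<subseteq> (\<lambda>(x, y). ucls (du (rep x) (rep y))) ` (supp a \<times> supp b)"
proof
  fix z assume "z \<in> supp (gmult a b)"
  then have "(\<Sum>(x, y) \<in> supp a \<times> supp b. if ucls (du (rep x) (rep y)) = z then a x * b y else 0) \<noteq> 0"
    unfolding supp_def gmult_def by simp
  then obtain p where "p \<in> supp a \<times> supp b"
    "(case p of (x, y) \<Rightarrow> if ucls (du (rep x) (rep y)) = z then a x * b y else 0) \<noteq> 0"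
    by (rule sum.not_neutral_contains_not_neutral)
  then show "z \<in> (\<lambda>(x, y). ucls (du (rep x) (rep y))) ` (supp a \<times> supp b)"
    by (cases p) (auto split: if_splits)
qed

lemma gen_alg_supported_on:
  assumes unit: "ucls empty2 \<in> X"
    and mult: "\<And>x y. x \<in> X \<Longrightarrow> y \<in> X \<Longrightarrow> ucls (du (rep x) (rep y)) \<in> X"
    and a: "a \<in> gen_alg X"
  shows "a \<in> supported_on X"
  using a
proof (induction rule: gen_alg.induct)
  case (gen x)
  then show ?case unfolding supported_on_def by (simp add: supp_gbasis)
next
  case unit
  then show ?case unfolding supported_on_def gunit_def by (simp add: supp_gbasis assms(1))
next
  case zero
  then show ?case unfolding supported_on_def supp_def by simp
next
  case (add a b)
  have "supp (\<lambda>z. a z + b z) \<subseteq> supp a \<union> supp b" unfolding supp_def by auto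
  then show ?case using add.IH unfolding supported_on_def by (auto intro: finite_subset)
next
  case (smult a c)
  have "supp (\<lambda>z. c * a z) \<subseteq> supp a" unfolding supp_def by auto
  then show ?case using smult.IH unfolding supported_on_def by (auto intro: finite_subset)
next
  case (mult a b)
  then have "(\<lambda>(x, y). ucls (du (rep x) (rep y))) ` (supp a \<times> supp b) \<subseteq> X"
    "finite ((\<lambda>(x, y). ucls (du (rep x) (rep y))) ` (supp a \<times> supp b))"
    using assms(2) unfolding supported_on_def by auto
  then show ?case
    using supp_gmult[of a b] unfolding supported_on_def by (auto intro: finite_subset)
qed

lemma qspan_add_smult:
  assumes u: "u \<in> qspan T" and v: "v \<in> qspan T"
  shows "(\<lambda>z. u z + c * v z) \<in> qspan T"
  using v
proof (induction arbitrary: c rule: qspan.induct)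
  case zero
  then show ?case using u by simp
next
  case (step w t d)
  have "(\<lambda>z. (u z + c * w z) + (c * d) * t z) \<in> qspan T"
    using qspan.step[OF step.IH step.hyps(2)] .
  then show ?case by (simp add: algebra_simps)
qed

lemma qspan_base: "t \<in> T \<Longrightarrow> t \<in> qspan T"
  using qspan.step[OF qspan.zero, of t T 1] by simp

lemma qspan_sum:
  assumes "finite I" "\<And>i. i \<in> I \<Longrightarrow> f i \<in> qspan T"
  shows "(\<lambda>z. \<Sum>i\<in>I. c i * f i z) \<in> qspan T"
  using assms
proof (induction I rule: finite_induct)
  case empty
  then show ?case using qspan.zero by simp
next
  case (insert i I)
  then have "(\<lambda>z. (\<Sum>i\<in>I. c i * f i z) + c i * f i z) \<in> qspan T"
    using qspan_add_smult by blast
  then show ?case using insert by (simp add: add.commute)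
qed

lemma finite_edges: "wf2 G \<Longrightarrow> finite (edges G)"
proof -
  assume "wf2 G"
  moreover have "edges G \<subseteq> (\<lambda>h. {h, iota G h}) ` H G" unfolding edges_def by auto
  ultimately show ?thesis using wf2D(2) finite_subset by blast
qed

lemma coprod_basis_eq_sum:
  assumes "wf2 (rep x)"
  shows "coprod_basis x = (\<lambda>pq. \<Sum>F\<in>Pow (edges (rep x)).
      1 * gtensor (gbasis (ucls (subg (rep x) F))) (gbasis (ucls (contr (rep x) F))) pq)"
proof
  fix pq :: "graph2 set \<times> graph2 set"
  obtain p q where pq: "pq = (p, q)" by force
  let ?P = "\<lambda>F. ucls (subg (rep x) F) = p \<and> ucls (contr (rep x) F) = q"
  have "(\<Sum>F\<in>Pow (edges (rep x)). 1 * gtensor (gbasis (ucls (subg (rep x) F))) (gbasis (ucls (contr (rep x) F))) pq)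
      = (\<Sum>F\<in>Pow (edges (rep x)). if ?P F then 1 else 0)"
    unfolding gtensor_def gbasis_def pq by (intro sum.cong) auto
  also have "\<dots> = of_nat (card {F \<in> Pow (edges (rep x)). ?P F})"
    using finite_edges[OF assms] by (simp add: sum.If_cases Int_def)
  also have "{F \<in> Pow (edges (rep x)). ?P F} = {F. F \<subseteq> edges (rep x) \<and> ?P F}" by auto
  finally show "coprod_basis x pq = (\<Sum>F\<in>Pow (edges (rep x)).
      1 * gtensor (gbasis (ucls (subg (rep x) F))) (gbasis (ucls (contr (rep x) F))) pq)"
    unfolding coprod_basis_def pq by simp
qed

lemma wf2_rep: "x \<in> UG2 \<Longrightarrow> wf2 (rep x)"
  unfolding UG2_def using rep_ucls(1) by blast

lemma is_subalgebra_gen_alg: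
  assumes X: "X \<subseteq> UG2" and unit: "ucls empty2 \<in> X"
    and mult: "\<And>x y. x \<in> X \<Longrightarrow> y \<in> X \<Longrightarrow> ucls (du (rep x) (rep y)) \<in> X"
  shows "is_subalgebra (gen_alg X)"
  unfolding is_subalgebra_def
proof (intro conjI ballI allI)
  show "gen_alg X \<subseteq> algG"
    using gen_alg_supported_on[OF unit mult] X unfolding algG_def supported_on_def by blast
qed (simp_all add: gen_alg.intros)

lemma coprod_basis_in_qspan:
  assumes x: "x \<in> X" "x \<in> UG2"
    and coprod: "\<And>F. F \<subseteq> edges (rep x) \<Longrightarrow> ucls (subg (rep x) F) \<in> X \<and> ucls (contr (rep x) F) \<in> X"
  shows "coprod_basis x \<in> qspan (case_prod gtensor ` (gen_alg X \<times> gen_alg X))"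
proof -
  have R: "wf2 (rep x)" using wf2_rep[OF x(2)] .
  have "gtensor (gbasis (ucls (subg (rep x) F))) (gbasis (ucls (contr (rep x) F)))
      \<in> qspan (case_prod gtensor ` (gen_alg X \<times> gen_alg X))" if "F \<subseteq> edges (rep x)" for F
    using coprod[OF that]
    by (intro qspan_base image_eqI[of _ _ "(gbasis (ucls (subg (rep x) F)), gbasis (ucls (contr (rep x) F)))"])
      (simp_all add: gen_alg.gen)
  then show ?thesis
    unfolding coprod_basis_eq_sum[OF R] using finite_edges[OF R] by (intro qspan_sum) auto
qed

lemma is_subbialgebra_gen_alg:
  assumes X: "X \<subseteq> UG2" and unit: "ucls empty2 \<in> X"
    and mult: "\<And>x y. x \<in> X \<Longrightarrow> y \<in> X \<Longrightarrow> ucls (du (rep x) (rep y)) \<in> X"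
    and coprod: "\<And>x F. x \<in> X \<Longrightarrow> F \<subseteq> edges (rep x)
      \<Longrightarrow> ucls (subg (rep x) F) \<in> X \<and> ucls (contr (rep x) F) \<in> X"
  shows "is_subbialgebra (gen_alg X)"
proof -
  have "coprod_basis x \<in> qspan (case_prod gtensor ` (gen_alg X \<times> gen_alg X))" if "x \<in> X" for x
    using coprod_basis_in_qspan[of x X] that X coprod[OF that] by blast
  then have "gcoprod a \<in> qspan (case_prod gtensor ` (gen_alg X \<times> gen_alg X))" if "a \<in> gen_alg X" for a
    using gen_alg_supported_on[OF unit mult that]
    unfolding gcoprod_def supported_on_def by (intro qspan_sum) auto
  then show ?thesis
    unfolding is_subbialgebra_def using is_subalgebra_gen_alg[OF X unit mult] by blast
qed

theorem mainTheorem4: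
  fixes VV :: "graph1 set set"
  assumes "VV \<subseteq> UG1"
  shows "is_subbialgebra (gen_alg (cclosure VV))"
proof -
  show ?thesis
    using is_subbialgebra_gen_alg[OF cclosure_subset_UG2 empty2_in_cclosure du_in_cclosure]
      subg_contr_in_cclosure
    by blast
qed

end
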